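(* Let $n\ge 2$, $N=\binom n2$, and let $F$ be a fundamental basic block with exactly $n$ reducible elements $u_1<u_2<\cdots<u_n$ and nullity $l$. Then $F$ has an adjunct representation $$F=C_0'\,]^{b_1}_{a_1}\{c_{q_1}\}\,]^{b_2}_{a_2}\{c_{q_2}\}\cdots]^{b_l}_{a_l}\{c_{q_l}\},$$ where each adjunct chain is a single element, for each $s$ we have $a_s=u_i$, $b_s=u_j$ for some $1\le i<j\le n$ with $q_s=(i-1)n-\binom i2+j-i$, $q_1<q_2<\cdots<q_l$ (so the $l$ adjunct pairs are distinct), and $C_0'$ is the chain consisting of $u_1,\dots,u_n$ together with, for each $i$ such that $(u_i,u_{i+1})$ is one of the adjunct pairs, exactly one element $x_i$ with $u_i\prec x_i\prec u_{i+1}$ (and $u_i\prec u_{i+1}$ in $C_0'$ otherwise). In particular $F$ is isomorphic to a sublattice of $\mathrm{CF}(n)$ containing all of its reducible elements.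
   Context: An element of a lattice is reducible if it is $y\vee z$ or $y\wedge z$ for some $y,z$ both distinct from it; an element of a poset is doubly irreducible if it has at most one upper and at most one lower cover. The nullity $\eta(P)$ of a finite poset is $|E|-|V|+c$ for its cover graph (edges = coverings), $c$ the number of components. Adjunct operation: for disjoint lattices $L_1,L_2$ and $a<b$ in $L_1$ with $b$ not covering $a$, $L_1\,]_a^b\,L_2$ is $L_1\cup L_2$ with $x\le y$ iff $x\le y$ within $L_1$ or within $L_2$, or $x\in L_1,y\in L_2,x\le a$, or $x\in L_2,y\in L_1,b\le y$. An RC-lattice is a finite lattice whose reducible elements are pairwise comparable; it is an adjunct of chains $C_0\,]_{a_1}^{b_1}C_1\cdots]_{a_r}^{b_r}C_r$ ($C_0$ maximal chain), unique up to order of adjunct pairs. A basic block is a poset that has one element, or has no doubly irreducible elements, or from which removal of a doubly irreducible element reduces nullity by one. A fundamental basic block is an RC-lattice that is a basic block whose adjunct representation has pairwise distinct adjunct pairs. $\mathrm{CF}(n)$ denotes the fundamental basic block with $n$ reducible elements $u_1<\dots<u_n$ and nullity $\binom n2$: the chain $u_1\prec x_1\prec u_2\prec\cdots\prec x_{n-1}\prec u_n$ together with, for every $1\le i<j\le n$, one element $c_k$, $k=(i-1)n-\binom i2+j-i$, satisfying $u_i\prec c_k\prec u_j$. *)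

theory Defs
  imports Main
begin

text \<open>Finite posets are represented by a carrier set V and an order relation le
  (only its values on V matter).\<close>

type_synonym 'a poset = "'a set \<times> ('a \<Rightarrow> 'a \<Rightarrow> bool)"

definition po_on :: "'a set \<Rightarrow> ('a \<Rightarrow> 'a \<Rightarrow> bool) \<Rightarrow> bool" where
  "po_on V le \<longleftrightarrow> (\<forall>x\<in>V. le x x)
     \<and> (\<forall>x\<in>V. \<forall>y\<in>V. le x y \<and> le y x \<longrightarrow> x = y)
     \<and> (\<forall>x\<in>V. \<forall>y\<in>V. \<forall>z\<in>V. le x y \<and> le y z \<longrightarrow> le x z)"

definition is_lub :: "'a set \<Rightarrow> ('a \<Rightarrow> 'a \<Rightarrow> bool) \<Rightarrow> 'a \<Rightarrow> 'a \<Rightarrow> 'a \<Rightarrow> bool" where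
  "is_lub V le x y z \<longleftrightarrow> z \<in> V \<and> le x z \<and> le y z \<and> (\<forall>w\<in>V. le x w \<and> le y w \<longrightarrow> le z w)"

definition is_glb :: "'a set \<Rightarrow> ('a \<Rightarrow> 'a \<Rightarrow> bool) \<Rightarrow> 'a \<Rightarrow> 'a \<Rightarrow> 'a \<Rightarrow> bool" where
  "is_glb V le x y z \<longleftrightarrow> z \<in> V \<and> le z x \<and> le z y \<and> (\<forall>w\<in>V. le w x \<and> le w y \<longrightarrow> le w z)"

definition fin_lattice :: "'a set \<Rightarrow> ('a \<Rightarrow> 'a \<Rightarrow> bool) \<Rightarrow> bool" where
  "fin_lattice V le \<longleftrightarrow> finite V \<and> V \<noteq> {} \<and> po_on V le
     \<and> (\<forall>x\<in>V. \<forall>y\<in>V. (\<exists>z. is_lub V le x y z) \<and> (\<exists>z. is_glb V le x y z))"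

definition reducible :: "'a set \<Rightarrow> ('a \<Rightarrow> 'a \<Rightarrow> bool) \<Rightarrow> 'a \<Rightarrow> bool" where
  "reducible V le x \<longleftrightarrow> x \<in> V \<and> (\<exists>y\<in>V. \<exists>z\<in>V. y \<noteq> x \<and> z \<noteq> x \<and>
       (is_lub V le y z x \<or> is_glb V le y z x))"

definition covers :: "'a set \<Rightarrow> ('a \<Rightarrow> 'a \<Rightarrow> bool) \<Rightarrow> 'a \<Rightarrow> 'a \<Rightarrow> bool" where
  "covers V le x y \<longleftrightarrow> x \<in> V \<and> y \<in> V \<and> x \<noteq> y \<and> le x y \<and>
     \<not> (\<exists>z\<in>V. z \<noteq> x \<and> z \<noteq> y \<and> le x z \<and> le z y)"

definition doubly_irreducible :: "'a set \<Rightarrow> ('a \<Rightarrow> 'a \<Rightarrow> bool) \<Rightarrow> 'a \<Rightarrow> bool" where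
  "doubly_irreducible V le x \<longleftrightarrow> x \<in> V \<and>
     card {y\<in>V. covers V le x y} \<le> 1 \<and> card {y\<in>V. covers V le y x} \<le> 1"

definition cover_edges :: "'a set \<Rightarrow> ('a \<Rightarrow> 'a \<Rightarrow> bool) \<Rightarrow> ('a \<times> 'a) set" where
  "cover_edges V le = {(x, y). covers V le x y}"

definition cover_conn :: "'a set \<Rightarrow> ('a \<Rightarrow> 'a \<Rightarrow> bool) \<Rightarrow> ('a \<times> 'a) set" where
  "cover_conn V le = {(x, y). x \<in> V \<and> y \<in> V \<and>
     (\<lambda>a b. covers V le a b \<or> covers V le b a)\<^sup>*\<^sup>* x y}"

definition nullity :: "'a set \<Rightarrow> ('a \<Rightarrow> 'a \<Rightarrow> bool) \<Rightarrow> int" where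
  "nullity V le = int (card (cover_edges V le)) - int (card V)
                  + int (card (V // cover_conn V le))"

definition basic_block :: "'a set \<Rightarrow> ('a \<Rightarrow> 'a \<Rightarrow> bool) \<Rightarrow> bool" where
  "basic_block V le \<longleftrightarrow> card V = 1 \<or> \<not> (\<exists>x. doubly_irreducible V le x) \<or>
     (\<forall>x. doubly_irreducible V le x \<longrightarrow> nullity (V - {x}) le = nullity V le - 1)"

definition is_chain :: "'a set \<Rightarrow> ('a \<Rightarrow> 'a \<Rightarrow> bool) \<Rightarrow> 'a set \<Rightarrow> bool" where
  "is_chain V le C \<longleftrightarrow> C \<subseteq> V \<and> (\<forall>x\<in>C. \<forall>y\<in>C. le x y \<or> le y x)"

definition maximal_chain :: "'a set \<Rightarrow> ('a \<Rightarrow> 'a \<Rightarrow> bool) \<Rightarrow> 'a set \<Rightarrow> bool" where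
  "maximal_chain V le C \<longleftrightarrow> is_chain V le C \<and> (\<forall>D. is_chain V le D \<and> C \<subseteq> D \<longrightarrow> D = C)"

definition rc_lattice :: "'a set \<Rightarrow> ('a \<Rightarrow> 'a \<Rightarrow> bool) \<Rightarrow> bool" where
  "rc_lattice V le \<longleftrightarrow> fin_lattice V le \<and>
     (\<forall>x y. reducible V le x \<and> reducible V le y \<longrightarrow> le x y \<or> le y x)"

definition adjunct :: "'a poset \<Rightarrow> 'a \<Rightarrow> 'a \<Rightarrow> 'a poset \<Rightarrow> 'a poset" where
  "adjunct L1 a b L2 = (fst L1 \<union> fst L2, (\<lambda>x y.
       (x \<in> fst L1 \<and> y \<in> fst L1 \<and> snd L1 x y)
     \<or> (x \<in> fst L2 \<and> y \<in> fst L2 \<and> snd L2 x y)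
     \<or> (x \<in> fst L1 \<and> y \<in> fst L2 \<and> snd L1 x a)
     \<or> (x \<in> fst L2 \<and> y \<in> fst L1 \<and> snd L1 b y)))"

definition adjunct_ok :: "'a poset \<Rightarrow> 'a \<Rightarrow> 'a \<Rightarrow> 'a poset \<Rightarrow> bool" where
  "adjunct_ok L1 a b L2 \<longleftrightarrow> fin_lattice (fst L1) (snd L1) \<and> fin_lattice (fst L2) (snd L2)
     \<and> fst L1 \<inter> fst L2 = {} \<and> a \<in> fst L1 \<and> b \<in> fst L1 \<and> a \<noteq> b \<and> snd L1 a b
     \<and> \<not> covers (fst L1) (snd L1) a b"

fun adj_fold :: "('a \<Rightarrow> 'a \<Rightarrow> bool) \<Rightarrow> 'a poset \<Rightarrow> ('a \<times> 'a \<times> 'a set) list \<Rightarrow> 'a poset" where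
  "adj_fold le L [] = L"
| "adj_fold le L ((a, b, C) # ps) = adj_fold le (adjunct L a b (C, le)) ps"

fun adj_valid :: "('a \<Rightarrow> 'a \<Rightarrow> bool) \<Rightarrow> 'a poset \<Rightarrow> ('a \<times> 'a \<times> 'a set) list \<Rightarrow> bool" where
  "adj_valid le L [] = True"
| "adj_valid le L ((a, b, C) # ps) =
     (adjunct_ok L a b (C, le) \<and> adj_valid le (adjunct L a b (C, le)) ps)"

text \<open>(V, le) = C0 ]_{a1}^{b1} C1 ... ]_{ar}^{br} Cr, with C0 a maximal chain and each Cs a chain,
  given as the list ps of triples (a_s, b_s, C_s).\<close>
definition adjunct_rep :: "'a set \<Rightarrow> ('a \<Rightarrow> 'a \<Rightarrow> bool) \<Rightarrow> 'a set \<Rightarrow> ('a \<times> 'a \<times> 'a set) list \<Rightarrow> bool" where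
  "adjunct_rep V le C0 ps \<longleftrightarrow> maximal_chain V le C0
     \<and> (\<forall>(a, b, C) \<in> set ps. is_chain V le C \<and> C \<noteq> {})
     \<and> adj_valid le (C0, le) ps
     \<and> fst (adj_fold le (C0, le) ps) = V
     \<and> (\<forall>x\<in>V. \<forall>y\<in>V. snd (adj_fold le (C0, le) ps) x y = le x y)"

definition fundamental_basic_block :: "'a set \<Rightarrow> ('a \<Rightarrow> 'a \<Rightarrow> bool) \<Rightarrow> bool" where
  "fundamental_basic_block V le \<longleftrightarrow> rc_lattice V le \<and> basic_block V le \<and>
     (\<exists>C0 ps. adjunct_rep V le C0 ps \<and> distinct (map (\<lambda>(a, b, C). (a, b)) ps))"

definition cf_index :: "nat \<Rightarrow> nat \<Rightarrow> nat \<Rightarrow> nat" where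
  "cf_index n i j = (i - 1) * n - (i choose 2) + (j - i)"

text \<open>The lattice CF(n): U i = u_i, X i = x_i, Cc i j = c_k with k = cf_index n i j.\<close>
datatype cf_elem = U nat | X nat | Cc nat nat

definition cf_carrier :: "nat \<Rightarrow> cf_elem set" where
  "cf_carrier n = {U i | i. 1 \<le> i \<and> i \<le> n} \<union> {X i | i. 1 \<le> i \<and> i < n}
                  \<union> {Cc i j | i j. 1 \<le> i \<and> i < j \<and> j \<le> n}"

fun cf_pos :: "cf_elem \<Rightarrow> nat" where
  "cf_pos (U i) = 2 * i"
| "cf_pos (X i) = 2 * i + 1"
| "cf_pos (Cc i j) = 0"

fun cf_le :: "cf_elem \<Rightarrow> cf_elem \<Rightarrow> bool" where
  "cf_le (Cc i j) (Cc i' j') = ((i, j) = (i', j') \<or> j \<le> i')"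
| "cf_le (Cc i j) y = (2 * j \<le> cf_pos y)"
| "cf_le x (Cc i j) = (cf_pos x \<le> 2 * i)"
| "cf_le x y = (cf_pos x \<le> cf_pos y)"

definition sublattice :: "'a set \<Rightarrow> ('a \<Rightarrow> 'a \<Rightarrow> bool) \<Rightarrow> 'a set \<Rightarrow> bool" where
  "sublattice V le S \<longleftrightarrow> S \<subseteq> V \<and> S \<noteq> {} \<and>
     (\<forall>x\<in>S. \<forall>y\<in>S. \<forall>z. is_lub V le x y z \<or> is_glb V le x y z \<longrightarrow> z \<in> S)"

definition order_iso :: "'a set \<Rightarrow> ('a \<Rightarrow> 'a \<Rightarrow> bool) \<Rightarrow> 'b set \<Rightarrow> ('b \<Rightarrow> 'b \<Rightarrow> bool) \<Rightarrow> ('a \<Rightarrow> 'b) \<Rightarrow> bool" where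
  "order_iso V le W le' f \<longleftrightarrow> bij_betw f V W \<and> (\<forall>x\<in>V. \<forall>y\<in>V. le x y \<longleftrightarrow> le' (f x) (f y))"

end

theory Submission
  imports Defs "HOL-Library.Product_Lexorder"
begin

lemma po_on_refl: "po_on V le \<Longrightarrow> x \<in> V \<Longrightarrow> le x x"
  unfolding po_on_def by blast

lemma po_on_antisym: "po_on V le \<Longrightarrow> x \<in> V \<Longrightarrow> y \<in> V \<Longrightarrow> le x y \<Longrightarrow> le y x \<Longrightarrow> x = y"
  unfolding po_on_def by blast

lemma po_on_trans:
  "po_on V le \<Longrightarrow> x \<in> V \<Longrightarrow> y \<in> V \<Longrightarrow> z \<in> V \<Longrightarrow> le x y \<Longrightarrow> le y z \<Longrightarrow> le x z"
  unfolding po_on_def by blast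

lemma po_on_subset: "po_on V le \<Longrightarrow> W \<subseteq> V \<Longrightarrow> po_on W le"
  unfolding po_on_def by blast

lemma po_on_converse: "po_on V le \<Longrightarrow> po_on V (\<lambda>x y. le y x)"
  unfolding po_on_def by blast

lemma covers_converse: "covers V (\<lambda>x y. le y x) a b = covers V le b a"
  unfolding covers_def by blast

lemma covers_subset: "W \<subseteq> V \<Longrightarrow> x \<in> W \<Longrightarrow> y \<in> W \<Longrightarrow> covers V le x y \<Longrightarrow> covers W le x y"
  unfolding covers_def by blast

lemma covers_cong:
  "\<forall>x\<in>W. \<forall>y\<in>W. le x y = le' x y \<Longrightarrow> covers W le a b = covers W le' a b"
  unfolding covers_def by auto

lemma fin_lattice_cong:
  assumes agree: "\<forall>x\<in>W. \<forall>y\<in>W. le x y = le' x y"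
  shows "fin_lattice W le = fin_lattice W le'"
proof -
  have "po_on W le = po_on W le'"
    unfolding po_on_def using agree by auto
  moreover have "(\<exists>z. is_lub W le x y z) = (\<exists>z. is_lub W le' x y z)"
    "(\<exists>z. is_glb W le x y z) = (\<exists>z. is_glb W le' x y z)" if "x \<in> W" "y \<in> W" for x y
    unfolding is_lub_def is_glb_def using agree that by auto
  ultimately show ?thesis
    unfolding fin_lattice_def by simp
qed

lemma po_on_ex_maximal:
  assumes "finite S" "S \<noteq> {}" "S \<subseteq> V" "po_on V le"
  shows "\<exists>m\<in>S. \<forall>z\<in>S. le m z \<longrightarrow> z = m"
  using assms
proof (induction S rule: finite_ne_induct)
  case (singleton x)
  then show ?case by auto
next
  case (insert x F)
  then obtain m where m: "m \<in> F" "\<forall>z\<in>F. le m z \<longrightarrow> z = m"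
    by auto
  have xV: "x \<in> V" and FV: "F \<subseteq> V" and po: "po_on V le"
    using insert.prems by auto
  show ?case
  proof (cases "le m x")
    case True
    have "z = x" if z: "z \<in> insert x F" "le x z" for z
    proof (rule ccontr)
      assume zx: "z \<noteq> x"
      then have zF: "z \<in> F"
        using z by auto
      have "le m z"
        using po_on_trans[OF po _ xV, of m z] m(1) FV zF True z(2) by auto
      then have "z = m"
        using m zF by auto
      then show False
        using po_on_antisym[OF po _ xV, of m] m(1) FV True z(2) zx by auto
    qed
    then show ?thesis by blast
  next
    case False
    then show ?thesis using m by auto
  qed
qed

lemma ex_lower_cover_above:
  assumes fin: "finite V" and po: "po_on V le" and x: "x \<in> V" and v: "v \<in> V"
    and xv: "le x v" "x \<noteq> v"
  shows "\<exists>w. covers V le w v \<and> le x w"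
proof -
  let ?S = "{w \<in> V. le x w \<and> le w v \<and> w \<noteq> v}"
  have "x \<in> ?S"
    using x xv po_on_refl[OF po x] by auto
  then obtain m where m: "m \<in> ?S" "\<forall>z\<in>?S. le m z \<longrightarrow> z = m"
    using po_on_ex_maximal[of ?S V le] fin po by auto
  have "covers V le m v"
    unfolding covers_def
  proof (intro conjI)
    show "\<not> (\<exists>z\<in>V. z \<noteq> m \<and> z \<noteq> v \<and> le m z \<and> le z v)"
    proof
      assume "\<exists>z\<in>V. z \<noteq> m \<and> z \<noteq> v \<and> le m z \<and> le z v"
      then obtain z where z: "z \<in> V" "z \<noteq> m" "z \<noteq> v" "le m z" "le z v"
        by blast
      then have "z \<in> ?S"
        using po_on_trans[OF po x _ z(1)] m by auto
      then show False
        using m z by auto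
    qed
  qed (use m v in auto)
  then show ?thesis
    using m by auto
qed

lemma ex_upper_cover_below:
  assumes "finite V" "po_on V le" "x \<in> V" "v \<in> V" "le v x" "x \<noteq> v"
  shows "\<exists>w. covers V le v w \<and> le w x"
  using ex_lower_cover_above[OF assms(1) po_on_converse[OF assms(2)] assms(3-6)] covers_converse
  by metis

lemma fin_lattice_ex_lub: "fin_lattice V le \<Longrightarrow> x \<in> V \<Longrightarrow> y \<in> V \<Longrightarrow> \<exists>z. is_lub V le x y z"
  by (simp add: fin_lattice_def)

lemma fin_lattice_ex_glb: "fin_lattice V le \<Longrightarrow> x \<in> V \<Longrightarrow> y \<in> V \<Longrightarrow> \<exists>z. is_glb V le x y z"
  by (simp add: fin_lattice_def)

lemma fin_lattice_ex_bot:
  assumes "fin_lattice V le"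
  shows "\<exists>e\<in>V. \<forall>w\<in>V. le e w"
proof -
  have fin: "finite V" "V \<noteq> {}" and po: "po_on V le"
    using assms unfolding fin_lattice_def by auto
  obtain m where m: "m \<in> V" "\<forall>z\<in>V. le z m \<longrightarrow> z = m"
    using po_on_ex_maximal[OF fin subset_refl po_on_converse[OF po]] by auto
  have "le m w" if w: "w \<in> V" for w
  proof -
    obtain g where "is_glb V le m w g"
      using fin_lattice_ex_glb[OF assms m(1) w] by blast
    then have "g \<in> V" "le g m" "le g w"
      unfolding is_glb_def by auto
    then show ?thesis
      using m by auto
  qed
  then show ?thesis
    using m by auto
qed

lemma fin_lattice_ex_top:
  assumes "fin_lattice V le"
  shows "\<exists>e\<in>V. \<forall>w\<in>V. le w e"
proof -
  have fin: "finite V" "V \<noteq> {}" and po: "po_on V le"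
    using assms unfolding fin_lattice_def by auto
  obtain m where m: "m \<in> V" "\<forall>z\<in>V. le m z \<longrightarrow> z = m"
    using po_on_ex_maximal[OF fin subset_refl po] by auto
  have "le w m" if w: "w \<in> V" for w
  proof -
    obtain g where "is_lub V le m w g"
      using fin_lattice_ex_lub[OF assms m(1) w] by blast
    then have "g \<in> V" "le m g" "le w g"
      unfolding is_lub_def by auto
    then show ?thesis
      using m by auto
  qed
  then show ?thesis
    using m by auto
qed

definition cover_adj :: "'a set \<Rightarrow> ('a \<Rightarrow> 'a \<Rightarrow> bool) \<Rightarrow> 'a \<Rightarrow> 'a \<Rightarrow> bool" where
  "cover_adj V le a b \<longleftrightarrow> covers V le a b \<or> covers V le b a"

lemma cover_adj_converse: "cover_adj V (\<lambda>x y. le y x) = cover_adj V le"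
  unfolding cover_adj_def covers_def by (intro ext) blast

lemma cover_conn_cover_adj:
  "cover_conn V le = {(x, y). x \<in> V \<and> y \<in> V \<and> (cover_adj V le)\<^sup>*\<^sup>* x y}"
  unfolding cover_conn_def cover_adj_def by simp

lemma cover_adj_rtranclp_from_least:
  assumes fin: "finite V" and po: "po_on V le" and e: "e \<in> V" "\<forall>w\<in>V. le e w"
  shows "w \<in> V \<Longrightarrow> (cover_adj V le)\<^sup>*\<^sup>* e w"
proof (induction w rule: measure_induct_rule[where f = "\<lambda>w. card {z \<in> V. le z w}"])
  case (less w)
  show ?case
  proof (cases "w = e")
    case False
    obtain w' where w': "covers V le w' w" "le e w'"
      using ex_lower_cover_above[OF fin po e(1) less.prems] e(2) less.prems False by blast
    have w'V: "w' \<in> V" "le w' w" "w' \<noteq> w"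
      using w' unfolding covers_def by auto
    have "{z \<in> V. le z w'} \<subseteq> {z \<in> V. le z w}"
      using po_on_trans[OF po _ w'V(1) less.prems] w'V by auto
    moreover have "w \<in> {z \<in> V. le z w} - {z \<in> V. le z w'}"
      using po_on_antisym[OF po w'V(1) less.prems] po_on_refl[OF po less.prems] w'V less.prems
      by auto
    ultimately have "card {z \<in> V. le z w'} < card {z \<in> V. le z w}"
      using fin by (intro psubset_card_mono) auto
    then have "(cover_adj V le)\<^sup>*\<^sup>* e w'"
      using less.IH w'V by blast
    moreover have "cover_adj V le w' w"
      using w' unfolding cover_adj_def by blast
    ultimately show ?thesis
      by (rule rtranclp.rtrancl_into_rtrancl)
  qed simp
qed

lemma card_cover_components_of_least:
  assumes "finite V" "po_on V le" "e \<in> V" "\<forall>w\<in>V. le e w"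
  shows "card (V // cover_conn V le) = 1"
proof -
  have reach: "(cover_adj V le)\<^sup>*\<^sup>* e x" if "x \<in> V" for x
    using cover_adj_rtranclp_from_least[OF assms that] .
  have "symp (cover_adj V le)"
    unfolding cover_adj_def symp_def by blast
  have "(cover_adj V le)\<^sup>*\<^sup>* x y" if "x \<in> V" "y \<in> V" for x y
    using sympD[OF symp_rtranclp[OF \<open>symp (cover_adj V le)\<close>] reach[OF that(1)]] reach[OF that(2)]
    by (rule rtranclp_trans)
  then have "cover_conn V le = V \<times> V"
    unfolding cover_conn_cover_adj by auto
  then have "V // cover_conn V le = {V}"
    using assms(3) unfolding quotient_def by blast
  then show ?thesis
    by simp
qed

lemma card_cover_components_of_greatest:
  assumes "finite V" "po_on V le" "e \<in> V" "\<forall>w\<in>V. le w e"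
  shows "card (V // cover_conn V le) = 1"
proof -
  have "card (V // cover_conn V (\<lambda>x y. le y x)) = 1"
    using card_cover_components_of_least[OF assms(1) po_on_converse[OF assms(2)] assms(3)] assms(4)
    by blast
  moreover have "cover_conn V (\<lambda>x y. le y x) = cover_conn V le"
    using cover_adj_converse[of V le] by (simp add: cover_conn_cover_adj)
  ultimately show ?thesis
    by simp
qed

lemma covers_remove_point:
  assumes po: "po_on V le" and v: "v \<in> V"
    and c: "covers (V - {v}) le x y" and nc: "\<not> covers V le x y"
  shows "covers V le x v \<and> covers V le v y"
proof -
  have x: "x \<in> V" "x \<noteq> v" and y: "y \<in> V" "y \<noteq> v" and xy: "x \<noteq> y" "le x y"
    and between: "\<And>z. z \<in> V - {v} \<Longrightarrow> z \<noteq> x \<Longrightarrow> z \<noteq> y \<Longrightarrow> le x z \<Longrightarrow> le z y \<Longrightarrow> False"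
    using c unfolding covers_def by blast+
  obtain z where z: "z \<in> V" "z \<noteq> x" "z \<noteq> y" "le x z" "le z y"
    using nc xy x y unfolding covers_def by blast
  then have xvy: "le x v" "le v y"
    using between by blast+
  have "covers V le x v"
    unfolding covers_def
  proof (intro conjI)
    show "\<not> (\<exists>w\<in>V. w \<noteq> x \<and> w \<noteq> v \<and> le x w \<and> le w v)"
    proof
      assume "\<exists>w\<in>V. w \<noteq> x \<and> w \<noteq> v \<and> le x w \<and> le w v"
      then obtain w where w: "w \<in> V" "w \<noteq> x" "w \<noteq> v" "le x w" "le w v"
        by blast
      have "le w y" "w \<noteq> y"
        using po_on_trans[OF po w(1) v y(1)] po_on_antisym[OF po v y(1)] w xvy y by auto
      then show False
        using between[of w] w by blast
    qed
  qed (use x v xvy in auto)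
  moreover have "covers V le v y"
    unfolding covers_def
  proof (intro conjI)
    show "\<not> (\<exists>w\<in>V. w \<noteq> v \<and> w \<noteq> y \<and> le v w \<and> le w y)"
    proof
      assume "\<exists>w\<in>V. w \<noteq> v \<and> w \<noteq> y \<and> le v w \<and> le w y"
      then obtain w where w: "w \<in> V" "w \<noteq> v" "w \<noteq> y" "le v w" "le w y"
        by blast
      have "le x w" "w \<noteq> x"
        using po_on_trans[OF po x(1) v w(1)] po_on_antisym[OF po x(1) v] w xvy x by auto
      then show False
        using between[of w] w by blast
    qed
  qed (use y v xvy in auto)
  ultimately show ?thesis ..
qed

lemma cover_edges_remove_point:
  assumes po: "po_on V le" and v: "v \<in> V"
  shows "cover_edges (V - {v}) le
    = {e \<in> cover_edges V le. fst e \<noteq> v \<and> snd e \<noteq> v}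
      \<union> {(x, y). covers V le x v \<and> covers V le v y \<and> covers (V - {v}) le x y}"
    (is "?E' = ?Kept \<union> ?New")
proof
  show "?E' \<subseteq> ?Kept \<union> ?New"
  proof
    fix e
    assume "e \<in> ?E'"
    then obtain x y where e: "e = (x, y)" and c: "covers (V - {v}) le x y"
      unfolding cover_edges_def by auto
    then show "e \<in> ?Kept \<union> ?New"
      using covers_remove_point[OF po v c] unfolding cover_edges_def covers_def by auto
  qed
  show "?Kept \<union> ?New \<subseteq> ?E'"
    using covers_subset[of "V - {v}" V] unfolding cover_edges_def covers_def by auto
qed

text \<open>Removing a doubly irreducible element \<open>v\<close> deletes its at most two cover edges and
  adds the edge \<open>p \<prec> q\<close> if \<open>v\<close> was the only element between its covers \<open>p\<close> and \<open>q\<close>; so a drop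
  of the nullity by exactly one forces two cover edges at \<open>v\<close> and a second element between
  \<open>p\<close> and \<open>q\<close>.\<close>

lemma nullity_remove_imp_detour:
  assumes fin: "finite V" and po: "po_on V le" and v: "v \<in> V"
    and di: "doubly_irreducible V le v"
    and conn: "card (V // cover_conn V le) = 1"
    and conn': "card ((V - {v}) // cover_conn (V - {v}) le) = 1"
    and drop: "nullity (V - {v}) le = nullity V le - 1"
  shows "\<exists>p q. covers V le p v \<and> covers V le v q
    \<and> (\<exists>z\<in>V. z \<noteq> v \<and> z \<noteq> p \<and> z \<noteq> q \<and> le p z \<and> le z q)"
proof -
  define E where "E = cover_edges V le"
  define Lc where "Lc = {y \<in> V. covers V le y v}"
  define Uc where "Uc = {y \<in> V. covers V le v y}"
  define Ev where "Ev = {e \<in> E. fst e = v \<or> snd e = v}"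
  define G where "G = {(x, y). covers V le x v \<and> covers V le v y \<and> covers (V - {v}) le x y}"
  have cL: "card Lc \<le> 1" and cU: "card Uc \<le> 1"
    using di unfolding doubly_irreducible_def Lc_def Uc_def by auto
  have fE: "finite E"
    using finite_subset[of E "V \<times> V"] fin unfolding E_def cover_edges_def covers_def by auto
  have fL: "finite Lc" "finite Uc"
    using fin unfolding Lc_def Uc_def by auto
  have Ev_eq: "Ev = (\<lambda>y. (y, v)) ` Lc \<union> (\<lambda>y. (v, y)) ` Uc"
    unfolding Ev_def E_def cover_edges_def Lc_def Uc_def covers_def by auto
  have disj: "(\<lambda>y. (y, v)) ` Lc \<inter> (\<lambda>y. (v, y)) ` Uc = {}"
    unfolding Lc_def covers_def by auto
  have cEv: "card Ev = card Lc + card Uc"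
    unfolding Ev_eq using card_Un_disjoint[OF _ _ disj] fL by (simp add: card_image inj_on_def)
  have GLU: "G \<subseteq> Lc \<times> Uc"
    unfolding G_def Lc_def Uc_def covers_def by auto
  then have fG: "finite G" and cG: "card G \<le> card Lc * card Uc"
    using finite_subset[OF GLU] card_mono[OF _ GLU] fL by (auto simp: card_cartesian_product)
  have "(E - Ev) \<inter> G = {}"
    unfolding E_def Ev_def G_def cover_edges_def covers_def by auto
  moreover have "cover_edges (V - {v}) le = (E - Ev) \<union> G"
    using cover_edges_remove_point[OF po v] unfolding E_def Ev_def G_def by auto
  moreover have "card (E - Ev) = card E - card Ev"
    using card_Diff_subset[of Ev E] fE unfolding Ev_def by (auto intro: finite_subset)
  ultimately have cE': "card (cover_edges (V - {v}) le) = card E - card Ev + card G"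
    using card_Un_disjoint[OF _ fG] fE by simp
  have "card Ev \<le> card E"
    using card_mono[OF fE] unfolding Ev_def by auto
  moreover have "card (V - {v}) = card V - 1" "card V \<ge> 1"
    using v fin by (auto simp: Suc_le_eq card_gt_0_iff)
  ultimately have "card Ev = card G + 2"
    using drop conn conn' cE' unfolding nullity_def E_def by simp
  then have "card Lc = 1" "card Uc = 1" "card G = 0"
    using cL cU cG cEv by (auto simp: le_Suc_eq)
  then obtain p q where p: "Lc = {p}" and q: "Uc = {q}" and "G = {}"
    using fG by (metis card_0_eq card_1_singletonE)
  then have pv: "covers V le p v" and vq: "covers V le v q" and "\<not> covers (V - {v}) le p q"
    unfolding Lc_def Uc_def G_def by auto
  have pV: "p \<in> V" "p \<noteq> v" "le p v" and qV: "q \<in> V" "q \<noteq> v" "le v q"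
    using pv vq unfolding covers_def by auto
  then have "p \<noteq> q" "le p q"
    using po_on_antisym[OF po pV(1) v] po_on_trans[OF po pV(1) v qV(1)] by auto
  then obtain z where "z \<in> V - {v}" "z \<noteq> p" "z \<noteq> q" "le p z" "le z q"
    using \<open>\<not> covers (V - {v}) le p q\<close> pV qV unfolding covers_def by auto
  then show ?thesis
    using pv vq by blast
qed

lemma is_lub_commute: "is_lub V le x y z \<Longrightarrow> is_lub V le y x z"
  unfolding is_lub_def by blast

lemma is_glb_commute: "is_glb V le x y z \<Longrightarrow> is_glb V le y x z"
  unfolding is_glb_def by blast

lemma is_lub_unique: "po_on V le \<Longrightarrow> is_lub V le x y z \<Longrightarrow> is_lub V le x y z' \<Longrightarrow> z = z'"
  unfolding is_lub_def by (blast intro: po_on_antisym)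

lemma is_glb_unique: "po_on V le \<Longrightarrow> is_glb V le x y z \<Longrightarrow> is_glb V le x y z' \<Longrightarrow> z = z'"
  unfolding is_glb_def by (blast intro: po_on_antisym)

lemma is_lub_of_le: "po_on V le \<Longrightarrow> x \<in> V \<Longrightarrow> y \<in> V \<Longrightarrow> le x y \<Longrightarrow> is_lub V le x y y"
  unfolding is_lub_def by (blast intro: po_on_refl)

lemma is_glb_of_le: "po_on V le \<Longrightarrow> x \<in> V \<Longrightarrow> y \<in> V \<Longrightarrow> le x y \<Longrightarrow> is_glb V le x y x"
  unfolding is_glb_def by (blast intro: po_on_refl)

text \<open>Each element \<open>x\<close> occupies the interval \<open>[lo x, hi x]\<close> of the chain \<open>u 1 < \<dots> < u n\<close>,
  the degenerate intervals being exactly the points \<open>u k\<close>, and \<open>x < y\<close> holds iff the interval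
  of \<open>x\<close> ends where that of \<open>y\<close> begins or earlier. Both \<open>CF(n)\<close> and, as shown below, every
  fundamental basic block are of this form.\<close>

locale interval_order =
  fixes V :: "'a set" and le :: "'a \<Rightarrow> 'a \<Rightarrow> bool" and n :: nat
    and lo hi :: "'a \<Rightarrow> nat" and u :: "nat \<Rightarrow> 'a"
  assumes finite_carrier: "finite V"
    and n_pos: "1 \<le> n"
    and point_in: "\<And>k. 1 \<le> k \<Longrightarrow> k \<le> n \<Longrightarrow> u k \<in> V"
    and lo_point: "\<And>k. 1 \<le> k \<Longrightarrow> k \<le> n \<Longrightarrow> lo (u k) = k"
    and hi_point: "\<And>k. 1 \<le> k \<Longrightarrow> k \<le> n \<Longrightarrow> hi (u k) = k"
    and lo_hi_range: "\<And>x. x \<in> V \<Longrightarrow> 1 \<le> lo x \<and> lo x \<le> hi x \<and> hi x \<le> n"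
    and point_of_lo_eq_hi: "\<And>x. x \<in> V \<Longrightarrow> lo x = hi x \<Longrightarrow> x = u (lo x)"
    and le_iff: "\<And>x y. x \<in> V \<Longrightarrow> y \<in> V \<Longrightarrow> le x y \<longleftrightarrow> x = y \<or> hi x \<le> lo y"
begin

lemma partial_order: "po_on V le"
  unfolding po_on_def
proof (intro conjI ballI impI)
  fix x y
  assume xy: "x \<in> V" "y \<in> V" "le x y \<and> le y x"
  show "x = y"
  proof (rule ccontr)
    assume "x \<noteq> y"
    then have "lo x = hi x" "lo y = hi y" "lo x = lo y"
      using xy le_iff lo_hi_range[OF xy(1)] lo_hi_range[OF xy(2)] by force+
    then show False
      using point_of_lo_eq_hi[OF xy(1)] point_of_lo_eq_hi[OF xy(2)] \<open>x \<noteq> y\<close> by simp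
  qed
next
  fix x y z
  assume xyz: "x \<in> V" "y \<in> V" "z \<in> V" "le x y \<and> le y z"
  then have "x = y \<or> hi x \<le> lo y" "y = z \<or> hi y \<le> lo z"
    using le_iff by auto
  then show "le x z"
    using le_iff[OF xyz(1,3)] lo_hi_range[OF xyz(2)] by auto
qed (simp add: le_iff)

lemma le_point_hi: "x \<in> V \<Longrightarrow> le x (u (hi x))"
  using lo_hi_range[of x] point_in[of "hi x"] le_iff lo_point by auto

lemma point_lo_le: "x \<in> V \<Longrightarrow> le (u (lo x)) x"
  using lo_hi_range[of x] point_in[of "lo x"] le_iff hi_point by auto

lemma is_lub_incomparable:
  assumes x: "x \<in> V" and y: "y \<in> V" and "\<not> le x y" "\<not> le y x"
  shows "is_lub V le x y (u (max (hi x) (hi y)))"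
proof -
  let ?m = "max (hi x) (hi y)"
  have m: "1 \<le> ?m" "?m \<le> n"
    using lo_hi_range[OF x] lo_hi_range[OF y] by (auto simp: max_def)
  have "le (u ?m) w" if "w \<in> V" "le x w" "le y w" for w
    using that assms le_iff[OF x] le_iff[OF y] le_iff[OF point_in[OF m] that(1)] hi_point[OF m]
    by auto
  then show ?thesis
    unfolding is_lub_def using point_in[OF m] le_iff[OF x] le_iff[OF y] lo_point[OF m] by auto
qed

lemma is_glb_incomparable:
  assumes x: "x \<in> V" and y: "y \<in> V" and "\<not> le x y" "\<not> le y x"
  shows "is_glb V le x y (u (min (lo x) (lo y)))"
proof -
  let ?m = "min (lo x) (lo y)"
  have m: "1 \<le> ?m" "?m \<le> n"
    using lo_hi_range[OF x] lo_hi_range[OF y] by (auto simp: min_def)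
  have "le w (u ?m)" if "w \<in> V" "le w x" "le w y" for w
    using that assms le_iff[OF _ x] le_iff[OF _ y] le_iff[OF that(1) point_in[OF m]] lo_point[OF m]
    by auto
  then show ?thesis
    unfolding is_glb_def using point_in[OF m] le_iff[OF _ x] le_iff[OF _ y] hi_point[OF m] by auto
qed

lemma fin_lattice: "fin_lattice V le"
  unfolding fin_lattice_def
proof (intro conjI ballI)
  show "V \<noteq> {}"
    using point_in[of 1] n_pos by auto
next
  fix x y
  assume x: "x \<in> V" and y: "y \<in> V"
  show "\<exists>z. is_lub V le x y z"
    using is_lub_of_le[OF partial_order x y] is_lub_of_le[OF partial_order y x] is_lub_commute
      is_lub_incomparable[OF x y] by metis
  show "\<exists>z. is_glb V le x y z"
    using is_glb_of_le[OF partial_order x y] is_glb_of_le[OF partial_order y x] is_glb_commute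
      is_glb_incomparable[OF x y] by metis
qed (use finite_carrier partial_order in auto)

lemma is_lub_cases:
  assumes x: "x \<in> V" and y: "y \<in> V" and z: "is_lub V le x y z"
  shows "z = x \<or> z = y \<or> z \<in> u ` {1..n}"
proof -
  have "1 \<le> max (hi x) (hi y)" "max (hi x) (hi y) \<le> n"
    using lo_hi_range[OF x] lo_hi_range[OF y] by (auto simp: max_def)
  then show ?thesis
    using is_lub_of_le[OF partial_order x y] is_lub_of_le[OF partial_order y x] is_lub_commute
      is_lub_incomparable[OF x y] is_lub_unique[OF partial_order z]
    by (metis atLeastAtMost_iff image_eqI)
qed

lemma is_glb_cases:
  assumes x: "x \<in> V" and y: "y \<in> V" and z: "is_glb V le x y z"
  shows "z = x \<or> z = y \<or> z \<in> u ` {1..n}"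
proof -
  have "1 \<le> min (lo x) (lo y)" "min (lo x) (lo y) \<le> n"
    using lo_hi_range[OF x] lo_hi_range[OF y] by (auto simp: min_def)
  then show ?thesis
    using is_glb_of_le[OF partial_order x y] is_glb_of_le[OF partial_order y x] is_glb_commute
      is_glb_incomparable[OF x y] is_glb_unique[OF partial_order z]
    by (metis atLeastAtMost_iff image_eqI)
qed

lemma restrict:
  assumes "V' \<subseteq> V" "u ` {1..n} \<subseteq> V'"
  shows "interval_order V' le n lo hi u"
proof
  show "finite V'"
    using assms(1) finite_carrier finite_subset by blast
  show "\<And>x y. x \<in> V' \<Longrightarrow> y \<in> V' \<Longrightarrow> le x y \<longleftrightarrow> x = y \<or> hi x \<le> lo y"
    using le_iff assms(1) by blast
qed (use assms n_pos lo_point hi_point lo_hi_range point_of_lo_eq_hi in auto)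

lemma covers_point_lo:
  assumes x: "x \<in> V" and lt: "lo x < hi x"
  shows "covers V le (u (lo x)) x"
  unfolding covers_def
proof (intro conjI)
  have r: "1 \<le> lo x" "lo x \<le> n"
    using lo_hi_range[OF x] by auto
  show "u (lo x) \<in> V" "u (lo x) \<noteq> x"
    using point_in[OF r] lt hi_point[OF r] by auto
  show "\<not> (\<exists>z\<in>V. z \<noteq> u (lo x) \<and> z \<noteq> x \<and> le (u (lo x)) z \<and> le z x)"
  proof
    assume "\<exists>z\<in>V. z \<noteq> u (lo x) \<and> z \<noteq> x \<and> le (u (lo x)) z \<and> le z x"
    then obtain z where z: "z \<in> V" "z \<noteq> u (lo x)" "z \<noteq> x" "le (u (lo x)) z" "le z x"
      by blast
    then have "lo z = hi z" "lo z = lo x"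
      using le_iff[OF point_in[OF r] z(1)] hi_point[OF r] le_iff[OF z(1) x] lo_hi_range[OF z(1)]
      by auto
    then show False
      using point_of_lo_eq_hi[OF z(1)] z(2) by metis
  qed
qed (use x point_lo_le[OF x] in auto)

lemma covers_hi_point:
  assumes x: "x \<in> V" and lt: "lo x < hi x"
  shows "covers V le x (u (hi x))"
  unfolding covers_def
proof (intro conjI)
  have r: "1 \<le> hi x" "hi x \<le> n"
    using lo_hi_range[OF x] by auto
  show "u (hi x) \<in> V" "x \<noteq> u (hi x)"
    using point_in[OF r] lt lo_point[OF r] by auto
  show "\<not> (\<exists>z\<in>V. z \<noteq> x \<and> z \<noteq> u (hi x) \<and> le x z \<and> le z (u (hi x)))"
  proof
    assume "\<exists>z\<in>V. z \<noteq> x \<and> z \<noteq> u (hi x) \<and> le x z \<and> le z (u (hi x))"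
    then obtain z where z: "z \<in> V" "z \<noteq> u (hi x)" "z \<noteq> x" "le x z" "le z (u (hi x))"
      by blast
    then have "lo z = hi z" "lo z = hi x"
      using le_iff[OF z(1) point_in[OF r]] lo_point[OF r] le_iff[OF x z(1)] lo_hi_range[OF z(1)]
      by auto
    then show False
      using point_of_lo_eq_hi[OF z(1)] z(2) by metis
  qed
qed (use x le_point_hi[OF x] in auto)

lemma covers_consecutive_points:
  assumes i: "1 \<le> i" "Suc i \<le> n" and empty: "\<not> (\<exists>z\<in>V. lo z = i \<and> hi z = Suc i)"
  shows "covers V le (u i) (u (Suc i))"
proof -
  have i1: "1 \<le> i" "i \<le> n" and i2: "1 \<le> Suc i" "Suc i \<le> n"
    using i by auto
  note pts = point_in[OF i1] point_in[OF i2] lo_point[OF i1] hi_point[OF i1] lo_point[OF i2]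
    hi_point[OF i2]
  show ?thesis
    unfolding covers_def
  proof (intro conjI)
    show "\<not> (\<exists>z\<in>V. z \<noteq> u i \<and> z \<noteq> u (Suc i) \<and> le (u i) z \<and> le z (u (Suc i)))"
    proof
      assume "\<exists>z\<in>V. z \<noteq> u i \<and> z \<noteq> u (Suc i) \<and> le (u i) z \<and> le z (u (Suc i))"
      then obtain z where z: "z \<in> V" "z \<noteq> u i" "z \<noteq> u (Suc i)" "le (u i) z" "le z (u (Suc i))"
        by blast
      then have "i \<le> lo z" "hi z \<le> Suc i"
        using le_iff pts by auto
      then show False
        using point_of_lo_eq_hi[OF z(1)] z(2,3) empty lo_hi_range[OF z(1)] z(1)
        by (cases "lo z = hi z") (auto simp: le_Suc_eq)
    qed
    show "u i \<noteq> u (Suc i)"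
      using pts by (metis n_not_Suc_n)
  qed (use pts le_iff in auto)
qed

lemma covers_cases:
  assumes c: "covers V le x y"
  shows "(lo x < hi x \<and> y = u (hi x)) \<or> (lo y < hi y \<and> x = u (lo y)) \<or>
    (\<exists>i. 1 \<le> i \<and> Suc i \<le> n \<and> x = u i \<and> y = u (Suc i) \<and> \<not> (\<exists>z\<in>V. lo z = i \<and> hi z = Suc i))"
proof -
  have x: "x \<in> V" and y: "y \<in> V" and xy: "x \<noteq> y" "le x y"
    and between: "\<And>z. z \<in> V \<Longrightarrow> z \<noteq> x \<Longrightarrow> z \<noteq> y \<Longrightarrow> le x z \<Longrightarrow> le z y \<Longrightarrow> False"
    using c unfolding covers_def by blast+
  have hl: "hi x \<le> lo y"
    using xy le_iff x y by auto
  show ?thesis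
  proof (cases "lo x < hi x")
    case True
    have r: "1 \<le> hi x" "hi x \<le> n"
      using lo_hi_range[OF x] by auto
    have "y = u (hi x)"
      using between[OF point_in[OF r]] True lo_point[OF r] le_point_hi[OF x]
        le_iff[OF point_in[OF r] y] hi_point[OF r] hl by fastforce
    then show ?thesis
      using True by blast
  next
    case False
    then have xu: "x = u (lo x)" "lo x = hi x"
      using point_of_lo_eq_hi[OF x] lo_hi_range[OF x] by auto
    show ?thesis
    proof (cases "lo y < hi y")
      case True
      have r: "1 \<le> lo y" "lo y \<le> n"
        using lo_hi_range[OF y] by auto
      have "x = u (lo y)"
        using between[OF point_in[OF r]] True hi_point[OF r] point_lo_le[OF y]
          le_iff[OF x point_in[OF r]] lo_point[OF r] hl by fastforce
      then show ?thesis
        using True by blast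
    next
      case False
      then have yu: "y = u (lo y)" "lo y = hi y"
        using point_of_lo_eq_hi[OF y] lo_hi_range[OF y] by auto
      have lt: "lo x < lo y"
        using hl xu yu xy(1) by (metis le_neq_implies_less)
      have r: "1 \<le> lo x" "lo y \<le> n"
        using lo_hi_range[OF x] lo_hi_range[OF y] by auto
      have suc: "lo y = Suc (lo x)"
      proof (rule ccontr)
        assume "lo y \<noteq> Suc (lo x)"
        then have m: "1 \<le> Suc (lo x)" "Suc (lo x) \<le> n" "Suc (lo x) < lo y"
          using lt r by auto
        then show False
          using between[OF point_in[OF m(1,2)]] lo_point[OF m(1,2)] hi_point[OF m(1,2)] xu yu
            le_iff[OF x point_in[OF m(1,2)]] le_iff[OF point_in[OF m(1,2)] y] by force
      qed
      moreover have "\<not> (\<exists>z\<in>V. lo z = lo x \<and> hi z = Suc (lo x))"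
      proof
        assume "\<exists>z\<in>V. lo z = lo x \<and> hi z = Suc (lo x)"
        then obtain z where z: "z \<in> V" "lo z = lo x" "hi z = Suc (lo x)"
          by blast
        have "z \<noteq> x" "z \<noteq> y"
          using z xu yu suc by auto
        moreover have "le x z" "le z y"
          using le_iff[OF x z(1)] le_iff[OF z(1) y] z xu suc by auto
        ultimately show False
          using between[OF z(1)] by blast
      qed
      ultimately show ?thesis
        using xu yu r lt by (metis Suc_leI)
    qed
  qed
qed

end

lemma irreducible_lower_cover_unique:
  assumes lat: "fin_lattice V le" and v: "v \<in> V" "\<not> reducible V le v"
    and a: "covers V le a v" and b: "covers V le b v"
  shows "a = b"
proof (rule ccontr)
  assume ab: "a \<noteq> b"
  have aV: "a \<in> V" "a \<noteq> v" "le a v" and bV: "b \<in> V" "b \<noteq> v" "le b v"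
    using a b unfolding covers_def by auto
  obtain z where z: "is_lub V le a b z"
    using fin_lattice_ex_lub[OF lat aV(1) bV(1)] by blast
  then have zV: "z \<in> V" "le a z" "le b z" "le z v"
    using v aV bV unfolding is_lub_def by auto
  have "z \<noteq> a"
    using zV b aV ab unfolding covers_def by blast
  then have "z = v"
    using a zV unfolding covers_def by blast
  then show False
    using z aV bV v unfolding reducible_def by blast
qed

lemma irreducible_upper_cover_unique:
  assumes lat: "fin_lattice V le" and v: "v \<in> V" "\<not> reducible V le v"
    and a: "covers V le v a" and b: "covers V le v b"
  shows "a = b"
proof (rule ccontr)
  assume ab: "a \<noteq> b"
  have aV: "a \<in> V" "a \<noteq> v" "le v a" and bV: "b \<in> V" "b \<noteq> v" "le v b"
    using a b unfolding covers_def by auto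
  obtain z where z: "is_glb V le a b z"
    using fin_lattice_ex_glb[OF lat aV(1) bV(1)] by blast
  then have zV: "z \<in> V" "le z a" "le z b" "le v z"
    using v aV bV unfolding is_glb_def by auto
  have "z \<noteq> a"
    using zV b aV ab unfolding covers_def by blast
  then have "z = v"
    using a zV unfolding covers_def by blast
  then show False
    using z aV bV v unfolding reducible_def by blast
qed

lemma irreducible_imp_doubly_irreducible:
  assumes lat: "fin_lattice V le" and v: "v \<in> V" "\<not> reducible V le v"
  shows "doubly_irreducible V le v"
proof -
  have fin: "finite V"
    using lat unfolding fin_lattice_def by blast
  have "card {y \<in> V. covers V le v y} \<le> Suc 0" "card {y \<in> V. covers V le y v} \<le> Suc 0"
    using irreducible_lower_cover_unique[OF lat v] irreducible_upper_cover_unique[OF lat v] fin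
    by (auto simp: card_le_Suc0_iff_eq)
  then show ?thesis
    unfolding doubly_irreducible_def using v by simp
qed

locale reducible_chain_block =
  fixes V :: "'a set" and le :: "'a \<Rightarrow> 'a \<Rightarrow> bool" and n :: nat and u :: "nat \<Rightarrow> 'a"
  assumes n_ge_2: "n \<ge> 2"
    and lattice: "fin_lattice V le"
    and basic: "basic_block V le"
    and chain: "\<forall>i\<in>{1..n}. \<forall>j\<in>{1..n}. i < j \<longrightarrow> le (u i) (u j) \<and> u i \<noteq> u j"
    and reducible_eq: "{x. reducible V le x} = u ` {1..n}"
begin

lemma finite_carrier: "finite V"
  using lattice unfolding fin_lattice_def by blast

lemma partial_order: "po_on V le"
  using lattice unfolding fin_lattice_def by blast

lemma point_in: "k \<in> {1..n} \<Longrightarrow> u k \<in> V"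
  using reducible_eq unfolding reducible_def by blast

lemma points_subset: "u ` {1..n} \<subseteq> V"
  using point_in by blast

lemma point_le_iff: "a \<in> {1..n} \<Longrightarrow> b \<in> {1..n} \<Longrightarrow> le (u a) (u b) \<longleftrightarrow> a \<le> b"
  using chain po_on_refl[OF partial_order point_in] po_on_antisym[OF partial_order point_in point_in]
  by (metis linorder_neqE_nat not_le order_refl)

lemma point_inj: "a \<in> {1..n} \<Longrightarrow> b \<in> {1..n} \<Longrightarrow> u a = u b \<Longrightarrow> a = b"
  using point_le_iff[of a b] point_le_iff[of b a] po_on_refl[OF partial_order point_in]
  by (metis le_antisym)

definition Irr :: "'a set" where
  "Irr = V - u ` {1..n}"

lemma Irr_iff: "v \<in> Irr \<longleftrightarrow> v \<in> V \<and> \<not> reducible V le v"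
  using reducible_eq unfolding Irr_def by blast

text \<open>The basic block condition for a doubly irreducible \<open>v\<close>: as the lattice stays connected
  when \<open>v\<close> is removed (through its bottom, or its top if \<open>v\<close> is the bottom), the nullity can only
  drop by one if \<open>v\<close> has a cover on each side and there is a detour between them.\<close>

lemma detour:
  assumes v: "v \<in> Irr"
  shows "\<exists>p q. covers V le p v \<and> covers V le v q
    \<and> (\<exists>z\<in>V. z \<noteq> v \<and> z \<noteq> p \<and> z \<noteq> q \<and> le p z \<and> le z q)"
proof -
  have vV: "v \<in> V" "\<not> reducible V le v"
    using v Irr_iff by auto
  have di: "doubly_irreducible V le v"
    using irreducible_imp_doubly_irreducible[OF lattice vV] .
  have u12: "u 1 \<in> V" "u 2 \<in> V" "u 1 \<noteq> u 2"
    using point_in chain n_ge_2 by auto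
  then have "card V \<noteq> 1"
    by (auto simp: card_1_singleton_iff)
  then have drop: "nullity (V - {v}) le = nullity V le - 1"
    using basic di unfolding basic_block_def by blast
  obtain e where e: "e \<in> V" "\<forall>w\<in>V. le e w"
    using fin_lattice_ex_bot[OF lattice] by blast
  obtain t where t: "t \<in> V" "\<forall>w\<in>V. le w t"
    using fin_lattice_ex_top[OF lattice] by blast
  have fin': "finite (V - {v})" and po': "po_on (V - {v}) le"
    using finite_carrier po_on_subset[OF partial_order] by auto
  have conn': "card ((V - {v}) // cover_conn (V - {v}) le) = 1"
  proof (cases "v = e")
    case False
    then show ?thesis
      using card_cover_components_of_least[OF fin' po', of e] e by auto
  next
    case True
    have "t \<noteq> e"
      using e t po_on_antisym[OF partial_order] u12 by metis
    then show ?thesis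
      using card_cover_components_of_greatest[OF fin' po', of t] t True by auto
  qed
  show ?thesis
    using nullity_remove_imp_detour[OF finite_carrier partial_order vV(1) di
        card_cover_components_of_least[OF finite_carrier partial_order e] conn' drop] .
qed

definition lower_cover :: "'a \<Rightarrow> 'a" where
  "lower_cover v = (THE p. covers V le p v)"

definition upper_cover :: "'a \<Rightarrow> 'a" where
  "upper_cover v = (THE q. covers V le v q)"

lemma covers_lower_cover: "v \<in> Irr \<Longrightarrow> covers V le (lower_cover v) v"
  unfolding lower_cover_def
  using detour irreducible_lower_cover_unique[OF lattice] Irr_iff by (metis theI)

lemma covers_upper_cover: "v \<in> Irr \<Longrightarrow> covers V le v (upper_cover v)"
  unfolding upper_cover_def
  using detour irreducible_upper_cover_unique[OF lattice] Irr_iff by (metis theI)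

lemma lower_cover_eq: "v \<in> Irr \<Longrightarrow> covers V le p v \<Longrightarrow> p = lower_cover v"
  using irreducible_lower_cover_unique[OF lattice] Irr_iff covers_lower_cover by blast

lemma upper_cover_eq: "v \<in> Irr \<Longrightarrow> covers V le v q \<Longrightarrow> q = upper_cover v"
  using irreducible_upper_cover_unique[OF lattice] Irr_iff covers_upper_cover by blast

lemma le_lower_cover: "v \<in> Irr \<Longrightarrow> x \<in> V \<Longrightarrow> le x v \<Longrightarrow> x \<noteq> v \<Longrightarrow> le x (lower_cover v)"
  using ex_lower_cover_above[OF finite_carrier partial_order] lower_cover_eq Irr_iff by metis

lemma upper_cover_le: "v \<in> Irr \<Longrightarrow> x \<in> V \<Longrightarrow> le v x \<Longrightarrow> x \<noteq> v \<Longrightarrow> le (upper_cover v) x"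
  using ex_upper_cover_below[OF finite_carrier partial_order] upper_cover_eq Irr_iff by metis

text \<open>A doubly irreducible lower cover \<open>w\<close> of \<open>v\<close> has \<open>v\<close> as its only upper cover, so its detour
  would lie below \<open>v\<close> and hence below \<open>w\<close>.\<close>

lemma lower_cover_point: "v \<in> Irr \<Longrightarrow> lower_cover v \<in> u ` {1..n}"
proof (rule ccontr)
  assume v: "v \<in> Irr" and nR: "lower_cover v \<notin> u ` {1..n}"
  have wv: "covers V le (lower_cover v) v"
    using covers_lower_cover[OF v] .
  then have w: "lower_cover v \<in> Irr"
    using nR unfolding Irr_def covers_def by blast
  obtain p q z where pq: "covers V le p (lower_cover v)" "covers V le (lower_cover v) q"
    and z: "z \<in> V" "z \<noteq> lower_cover v" "z \<noteq> p" "z \<noteq> q" "le p z" "le z q"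
    using detour[OF w] by blast
  have "q = v"
    using upper_cover_eq[OF w pq(2)] upper_cover_eq[OF w wv] by simp
  then have "le z (lower_cover v)"
    using le_lower_cover[OF v z(1)] z by auto
  then show False
    using pq(1) z unfolding covers_def by blast
qed

lemma upper_cover_point: "v \<in> Irr \<Longrightarrow> upper_cover v \<in> u ` {1..n}"
proof (rule ccontr)
  assume v: "v \<in> Irr" and nR: "upper_cover v \<notin> u ` {1..n}"
  have vw: "covers V le v (upper_cover v)"
    using covers_upper_cover[OF v] .
  then have w: "upper_cover v \<in> Irr"
    using nR unfolding Irr_def covers_def by blast
  obtain p q z where pq: "covers V le p (upper_cover v)" "covers V le (upper_cover v) q"
    and z: "z \<in> V" "z \<noteq> upper_cover v" "z \<noteq> p" "z \<noteq> q" "le p z" "le z q"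
    using detour[OF w] by blast
  have "p = v"
    using lower_cover_eq[OF w pq(1)] lower_cover_eq[OF w vw] by simp
  then have "le (upper_cover v) z"
    using upper_cover_le[OF v z(1)] z by auto
  then show False
    using pq(2) z unfolding covers_def by blast
qed

definition index :: "'a \<Rightarrow> nat" where
  "index y = (THE i. i \<in> {1..n} \<and> u i = y)"

lemma index_point: "k \<in> {1..n} \<Longrightarrow> index (u k) = k"
  unfolding index_def using point_inj by blast

lemma point_index: "y \<in> u ` {1..n} \<Longrightarrow> index y \<in> {1..n} \<and> u (index y) = y"
  using index_point by auto

definition lo :: "'a \<Rightarrow> nat" where
  "lo x = (if x \<in> u ` {1..n} then index x else index (lower_cover x))"

definition hi :: "'a \<Rightarrow> nat" where
  "hi x = (if x \<in> u ` {1..n} then index x else index (upper_cover x))"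

lemma lo_point: "k \<in> {1..n} \<Longrightarrow> lo (u k) = k"
  unfolding lo_def using index_point by auto

lemma hi_point: "k \<in> {1..n} \<Longrightarrow> hi (u k) = k"
  unfolding hi_def using index_point by auto

lemma point_lo:
  "x \<in> V \<Longrightarrow> lo x \<in> {1..n} \<and> u (lo x) = (if x \<in> u ` {1..n} then x else lower_cover x)"
  unfolding lo_def using point_index lower_cover_point Irr_def by auto

lemma point_hi:
  "x \<in> V \<Longrightarrow> hi x \<in> {1..n} \<and> u (hi x) = (if x \<in> u ` {1..n} then x else upper_cover x)"
  unfolding hi_def using point_index upper_cover_point Irr_def by auto

lemma point_le_iff_le_lo:
  assumes a: "a \<in> u ` {1..n}" and y: "y \<in> V"
  shows "le a y \<longleftrightarrow> le a (u (lo y))"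
proof (cases "y \<in> u ` {1..n}")
  case False
  then have yI: "y \<in> Irr"
    using y Irr_def by auto
  have "lower_cover y \<in> V" "le (lower_cover y) y"
    using covers_lower_cover[OF yI] unfolding covers_def by auto
  then show ?thesis
    using point_lo[OF y] False le_lower_cover[OF yI] a points_subset
      po_on_trans[OF partial_order _ _ y] by auto
qed (use point_lo[OF y] in simp)

lemma le_iff_le_hi:
  assumes x: "x \<in> V" and y: "y \<in> V" and xy: "x \<noteq> y"
  shows "le x y \<longleftrightarrow> le (u (hi x)) y"
proof (cases "x \<in> u ` {1..n}")
  case False
  then have xI: "x \<in> Irr"
    using x Irr_def by auto
  have "upper_cover x \<in> V" "le x (upper_cover x)"
    using covers_upper_cover[OF xI] unfolding covers_def by auto
  then show ?thesis
    using point_hi[OF x] False upper_cover_le[OF xI y] xy po_on_trans[OF partial_order x _ y] by auto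
qed (use point_hi[OF x] in simp)

lemma le_iff: "x \<in> V \<Longrightarrow> y \<in> V \<Longrightarrow> le x y \<longleftrightarrow> x = y \<or> hi x \<le> lo y"
  using le_iff_le_hi point_le_iff_le_lo point_lo point_hi point_le_iff po_on_refl[OF partial_order]
  by (metis image_eqI)

lemma lo_less_hi: "x \<in> Irr \<Longrightarrow> lo x < hi x"
proof -
  assume xI: "x \<in> Irr"
  have x: "x \<in> V" "x \<notin> u ` {1..n}"
    using xI Irr_def by auto
  have PQ: "lower_cover x \<in> V" "upper_cover x \<in> V" "le (lower_cover x) x" "le x (upper_cover x)"
    "lower_cover x \<noteq> x" "upper_cover x \<noteq> x"
    using covers_lower_cover[OF xI] covers_upper_cover[OF xI] unfolding covers_def by auto
  have "le (u (lo x)) (u (hi x))"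
    using point_lo[OF x(1)] point_hi[OF x(1)] x(2) po_on_trans[OF partial_order PQ(1) x(1) PQ(2)] PQ
    by simp
  then have "lo x \<le> hi x"
    using point_le_iff point_lo[OF x(1)] point_hi[OF x(1)] by blast
  moreover have "lo x \<noteq> hi x"
    using point_lo[OF x(1)] point_hi[OF x(1)] x(2) po_on_antisym[OF partial_order PQ(1) x(1)] PQ
    by auto
  ultimately show ?thesis
    by simp
qed

lemma interval_order: "interval_order V le n lo hi u"
proof
  show "\<And>x. x \<in> V \<Longrightarrow> 1 \<le> lo x \<and> lo x \<le> hi x \<and> hi x \<le> n"
    using point_lo point_hi lo_less_hi lo_point index_point Irr_def
    by (metis Diff_iff atLeastAtMost_iff less_imp_le_nat order_refl)
  show "\<And>x. x \<in> V \<Longrightarrow> lo x = hi x \<Longrightarrow> x = u (lo x)"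
    using point_lo lo_less_hi Irr_def by (metis DiffI less_irrefl)
qed (use finite_carrier n_ge_2 point_in lo_point hi_point le_iff in auto)

end

lemma adj_fold_append: "adj_fold le L (xs @ ys) = adj_fold le (adj_fold le L xs) ys"
proof (induction xs arbitrary: L)
  case (Cons p xs)
  then show ?case
    by (cases p) simp
qed simp

lemma adj_valid_append:
  "adj_valid le L (xs @ ys) \<longleftrightarrow> adj_valid le L xs \<and> adj_valid le (adj_fold le L xs) ys"
proof (induction xs arbitrary: L)
  case (Cons p xs)
  then show ?case
    by (cases p) simp
qed simp

lemma adj_fold_fst_mono: "fst L \<subseteq> fst (adj_fold le L xs)"
proof (induction xs arbitrary: L)
  case (Cons p xs)
  then show ?case
    by (cases p) (fastforce simp: adjunct_def)
qed simp

lemma adjunct_snd_old: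
  "adjunct_ok L1 a b L2 \<Longrightarrow> x \<in> fst L1 \<Longrightarrow> y \<in> fst L1 \<Longrightarrow> snd (adjunct L1 a b L2) x y = snd L1 x y"
  unfolding adjunct_ok_def adjunct_def by auto

lemma adj_fold_snd_old:
  "adj_valid le L xs \<Longrightarrow> x \<in> fst L \<Longrightarrow> y \<in> fst L \<Longrightarrow> snd (adj_fold le L xs) x y = snd L x y"
proof (induction xs arbitrary: L)
  case (Cons p xs)
  obtain a b C where p: "p = (a, b, C)"
    by (cases p)
  have ok: "adjunct_ok L a b (C, le)" and valid: "adj_valid le (adjunct L a b (C, le)) xs"
    using Cons.prems p by auto
  have "x \<in> fst (adjunct L a b (C, le))" "y \<in> fst (adjunct L a b (C, le))"
    using Cons.prems unfolding adjunct_def by auto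
  then show ?case
    using Cons.IH[OF valid] adjunct_snd_old[OF ok Cons.prems(2,3)] p by simp
qed simp

locale distinct_adjunct_rep =
  fixes V :: "'a set" and le :: "'a \<Rightarrow> 'a \<Rightarrow> bool"
    and C0 :: "'a set" and ps :: "('a \<times> 'a \<times> 'a set) list"
  assumes rep: "adjunct_rep V le C0 ps"
    and distinct_pairs: "distinct (map (\<lambda>(a, b, C). (a, b)) ps)"
    and partial_order: "po_on V le"
begin

definition stage_poset :: "nat \<Rightarrow> 'a poset" where
  "stage_poset k = adj_fold le (C0, le) (take k ps)"

definition stage :: "nat \<Rightarrow> 'a set" where
  "stage k = fst (stage_poset k)"

definition adj_lo :: "nat \<Rightarrow> 'a" where
  "adj_lo k = fst (ps ! k)"

definition adj_hi :: "nat \<Rightarrow> 'a" where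
  "adj_hi k = fst (snd (ps ! k))"

definition adj_chain :: "nat \<Rightarrow> 'a set" where
  "adj_chain k = snd (snd (ps ! k))"

lemma nth_ps: "ps ! k = (adj_lo k, adj_hi k, adj_chain k)"
  unfolding adj_lo_def adj_hi_def adj_chain_def by simp

lemma stage_0: "stage 0 = C0"
  unfolding stage_def stage_poset_def by simp

lemma stage_final: "stage (length ps) = V"
  using rep unfolding adjunct_rep_def stage_def stage_poset_def by simp

lemma stage_poset_Suc:
  "k < length ps \<Longrightarrow> stage_poset (Suc k) = adjunct (stage_poset k) (adj_lo k) (adj_hi k) (adj_chain k, le)"
  unfolding stage_poset_def using take_Suc_conv_app_nth[of k ps] nth_ps[of k]
  by (simp add: adj_fold_append)

lemma stage_Suc: "k < length ps \<Longrightarrow> stage (Suc k) = stage k \<union> adj_chain k"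
  unfolding stage_def using stage_poset_Suc unfolding adjunct_def by simp

lemma adjunct_ok_step:
  assumes k: "k < length ps"
  shows "adjunct_ok (stage_poset k) (adj_lo k) (adj_hi k) (adj_chain k, le)"
proof -
  have "adj_valid le (C0, le) (take (Suc k) ps)"
    using rep adj_valid_append[of le "(C0, le)" "take (Suc k) ps" "drop (Suc k) ps"]
    unfolding adjunct_rep_def by simp
  then show ?thesis
    unfolding stage_poset_def using take_Suc_conv_app_nth[OF k] nth_ps[of k]
    by (simp add: adj_valid_append)
qed

lemma stage_mono: "k \<le> k' \<Longrightarrow> stage k \<subseteq> stage k'"
proof -
  assume "k \<le> k'"
  then have "take k' ps = take k ps @ take (k' - k) (drop k ps)"
    by (metis le_add_diff_inverse take_add)
  then show ?thesis
    unfolding stage_def stage_poset_def by (metis adj_fold_append adj_fold_fst_mono)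
qed

lemma stage_subset: "stage k \<subseteq> V"
  using stage_mono[of k "length ps"] stage_final
  by (cases "k \<le> length ps") (auto simp: stage_def stage_poset_def)

lemma stage_order: "x \<in> stage k \<Longrightarrow> y \<in> stage k \<Longrightarrow> snd (stage_poset k) x y = le x y"
proof -
  assume xy: "x \<in> stage k" "y \<in> stage k"
  have "adj_valid le (stage_poset k) (drop k ps)"
    using rep adj_valid_append[of le "(C0, le)" "take k ps" "drop k ps"]
    unfolding adjunct_rep_def stage_poset_def by simp
  then have "snd (adj_fold le (C0, le) ps) x y = snd (stage_poset k) x y"
    using adj_fold_snd_old xy adj_fold_append[of le "(C0, le)" "take k ps" "drop k ps"]
    unfolding stage_def stage_poset_def by simp
  moreover have "snd (adj_fold le (C0, le) ps) x y = le x y"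
    using rep xy stage_subset unfolding adjunct_rep_def by blast
  ultimately show ?thesis
    by simp
qed

lemma adj_anchors:
  "k < length ps \<Longrightarrow> adj_lo k \<in> stage k \<and> adj_hi k \<in> stage k \<and> adj_lo k \<noteq> adj_hi k
    \<and> le (adj_lo k) (adj_hi k) \<and> stage k \<inter> adj_chain k = {}"
  using adjunct_ok_step[of k] stage_order[of "adj_lo k" k "adj_hi k"]
  unfolding adjunct_ok_def stage_def by auto

lemma adj_chain_comparable:
  assumes "k < length ps" "x \<in> adj_chain k" "y \<in> adj_chain k"
  shows "le x y \<or> le y x"
proof -
  have "(adj_lo k, adj_hi k, adj_chain k) \<in> set ps"
    using assms(1) nth_mem nth_ps by metis
  moreover have "\<forall>(a, b, C)\<in>set ps. is_chain V le C \<and> C \<noteq> {}"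
    using rep unfolding adjunct_rep_def by blast
  ultimately have "is_chain V le (adj_chain k)"
    by fastforce
  then show ?thesis
    using assms(2,3) unfolding is_chain_def by blast
qed

lemma C0_comparable: "x \<in> C0 \<Longrightarrow> y \<in> C0 \<Longrightarrow> le x y \<or> le y x"
  using rep unfolding adjunct_rep_def maximal_chain_def is_chain_def by auto

lemma le_adjoined:
  assumes k: "k < length ps" and x: "x \<in> stage k" and c: "c \<in> adj_chain k"
  shows "le x c \<longleftrightarrow> le x (adj_lo k)" and "le c x \<longleftrightarrow> le (adj_hi k) x"
proof -
  have anchors: "adj_lo k \<in> stage k" "adj_hi k \<in> stage k" "stage k \<inter> adj_chain k = {}"
    using adj_anchors[OF k] by auto
  have xc: "x \<in> stage (Suc k)" "c \<in> stage (Suc k)" "c \<notin> stage k" "x \<notin> adj_chain k"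
    using stage_Suc[OF k] x c anchors by auto
  show "le x c \<longleftrightarrow> le x (adj_lo k)"
    using stage_order[OF xc(1,2)] stage_order[OF x anchors(1)] stage_poset_Suc[OF k] x xc c
    unfolding adjunct_def stage_def by auto
  show "le c x \<longleftrightarrow> le (adj_hi k) x"
    using stage_order[OF xc(2,1)] stage_order[OF anchors(2) x] stage_poset_Suc[OF k] x xc c
    unfolding adjunct_def stage_def by auto
qed

lemma adj_pair_inj:
  assumes "i < length ps" "j < length ps" "adj_lo i = adj_lo j" "adj_hi i = adj_hi j"
  shows "i = j"
proof -
  have "map (\<lambda>(a, b, C). (a, b)) ps ! i = map (\<lambda>(a, b, C). (a, b)) ps ! j"
    using assms nth_ps[of i] nth_ps[of j] by simp
  then show ?thesis
    using distinct_pairs assms(1,2) nth_eq_iff_index_eq by fastforce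
qed

definition birth :: "'a \<Rightarrow> nat" where
  "birth x = (LEAST k. x \<in> stage k)"

lemma birth_stage: "x \<in> V \<Longrightarrow> x \<in> stage (birth x) \<and> birth x \<le> length ps"
  using LeastI[of "\<lambda>k. x \<in> stage k"] Least_le[of "\<lambda>k. x \<in> stage k"] stage_final
  unfolding birth_def by auto

lemma in_stage_iff: "x \<in> V \<Longrightarrow> x \<in> stage k \<longleftrightarrow> birth x \<le> k"
  using birth_stage stage_mono unfolding birth_def by (meson Least_le subsetD)

lemma birth_Suc:
  assumes x: "x \<in> V" and b: "birth x = Suc t"
  shows "t < length ps \<and> x \<in> adj_chain t \<and> x \<notin> stage t"
  using birth_stage[OF x] in_stage_iff[OF x, of t] stage_Suc[of t] b by auto

end

context distinct_adjunct_rep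
begin

definition open_interval :: "'a \<Rightarrow> 'a \<Rightarrow> 'a set" where
  "open_interval a b = {x \<in> V. le a x \<and> le x b \<and> x \<noteq> a \<and> x \<noteq> b}"

definition isolated :: "'a \<Rightarrow> 'a \<Rightarrow> 'a \<Rightarrow> bool" where
  "isolated a b v \<longleftrightarrow> v \<in> open_interval a b
    \<and> (\<forall>z\<in>open_interval a b. z \<noteq> v \<longrightarrow> \<not> le z v \<and> \<not> le v z)"

lemma not_isolated_of_hub:
  assumes "v \<in> S" "y \<in> S" "y \<noteq> v" "h \<in> S" "S \<subseteq> open_interval a b"
    and "\<forall>z\<in>S. le z h \<or> le h z"
  shows "\<not> isolated a b v"
  using assms unfolding isolated_def by (metis subsetD)

text \<open>An element \<open>x\<close> of \<open>(a, b)\<close> adjoined after \<open>a\<close> and \<open>b\<close> and incomparable with all earlier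
  elements of \<open>(a, b)\<close> must have been adjoined exactly between \<open>a\<close> and \<open>b\<close>: otherwise
  \<open>adj_lo t\<close> or \<open>adj_hi t\<close> would be an earlier element of \<open>(a, b)\<close> comparable with \<open>x\<close>.\<close>

lemma adj_pair_of_fresh:
  assumes a: "a \<in> V" and b: "b \<in> V" and x: "x \<in> open_interval a b" and birth_x: "birth x = Suc t"
    and "birth a \<le> t" "birth b \<le> t"
    and fresh: "\<forall>y\<in>open_interval a b \<inter> stage t. \<not> le y x \<and> \<not> le x y"
  shows "adj_lo t = a \<and> adj_hi t = b"
proof -
  have xI: "x \<in> V" "le a x" "le x b" "x \<noteq> a" "x \<noteq> b"
    using x unfolding open_interval_def by auto
  have t: "t < length ps" and xC: "x \<in> adj_chain t"
    using birth_Suc[OF xI(1) birth_x] by auto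
  have ab: "a \<in> stage t" "b \<in> stage t"
    using in_stage_iff a b assms by auto
  have AB: "adj_lo t \<in> stage t" "adj_hi t \<in> stage t" "adj_lo t \<in> V" "adj_hi t \<in> V"
    using adj_anchors[OF t] stage_subset by auto
  have "le a (adj_lo t)" "le (adj_lo t) x"
    using le_adjoined(1)[OF t ab(1) xC] le_adjoined(1)[OF t AB(1) xC] po_on_refl[OF partial_order AB(3)]
      xI by auto
  moreover have "le x (adj_hi t)" "le (adj_hi t) b"
    using le_adjoined(2)[OF t ab(2) xC] le_adjoined(2)[OF t AB(2) xC] po_on_refl[OF partial_order AB(4)]
      xI by auto
  ultimately have "le (adj_lo t) b" "le a (adj_hi t)" "adj_lo t \<noteq> b" "adj_hi t \<noteq> a"
    using po_on_trans[OF partial_order] po_on_antisym[OF partial_order] AB xI a b by metis+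
  then show ?thesis
    using fresh AB \<open>le (adj_lo t) x\<close> \<open>le x (adj_hi t)\<close> \<open>le a (adj_lo t)\<close> \<open>le (adj_hi t) b\<close>
    unfolding open_interval_def by blast
qed

lemma lower_anchor_hub:
  assumes t: "t < length ps" and a: "a \<in> stage t" and b: "b \<in> adj_chain t"
    and z: "z \<in> open_interval a b \<inter> stage t"
  shows "adj_lo t \<in> open_interval a b \<inter> stage (Suc t)
    \<and> (\<forall>y\<in>open_interval a b \<inter> stage (Suc t). le y (adj_lo t) \<or> le (adj_lo t) y)"
proof -
  have anchors: "adj_lo t \<in> stage t" "adj_lo t \<in> V" "stage t \<inter> adj_chain t = {}"
    using adj_anchors[OF t] stage_subset by auto
  have zI: "z \<in> V" "le a z" "le z b" "z \<noteq> a" "z \<in> stage t"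
    using z unfolding open_interval_def by auto
  have aV: "a \<in> V"
    using a stage_subset by auto
  have "le z (adj_lo t)"
    using le_adjoined(1)[OF t zI(5) b] zI by simp
  then have "le a (adj_lo t)" "adj_lo t \<noteq> a"
    using po_on_trans[OF partial_order aV zI(1) anchors(2)] po_on_antisym[OF partial_order zI(1) aV] zI
    by auto
  moreover have "le (adj_lo t) b" "adj_lo t \<noteq> b"
    using le_adjoined(1)[OF t anchors(1) b] po_on_refl[OF partial_order anchors(2)] anchors(1,3) b
    by auto
  moreover have "le y (adj_lo t) \<or> le (adj_lo t) y" if "y \<in> open_interval a b \<inter> stage (Suc t)" for y
    using that stage_Suc[OF t] le_adjoined(1)[OF t _ b] le_adjoined(1)[OF t anchors(1)]
      po_on_refl[OF partial_order anchors(2)] unfolding open_interval_def by auto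
  ultimately show ?thesis
    using anchors stage_Suc[OF t] unfolding open_interval_def by auto
qed

lemma upper_anchor_hub:
  assumes t: "t < length ps" and a: "a \<in> adj_chain t" and b: "b \<in> stage t"
    and z: "z \<in> open_interval a b \<inter> stage t"
  shows "adj_hi t \<in> open_interval a b \<inter> stage (Suc t)
    \<and> (\<forall>y\<in>open_interval a b \<inter> stage (Suc t). le y (adj_hi t) \<or> le (adj_hi t) y)"
proof -
  have anchors: "adj_hi t \<in> stage t" "adj_hi t \<in> V" "stage t \<inter> adj_chain t = {}"
    using adj_anchors[OF t] stage_subset by auto
  have zI: "z \<in> V" "le a z" "le z b" "z \<noteq> b" "z \<in> stage t"
    using z unfolding open_interval_def by auto
  have bV: "b \<in> V"
    using b stage_subset by auto
  have "le (adj_hi t) z"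
    using le_adjoined(2)[OF t zI(5) a] zI by simp
  then have "le (adj_hi t) b" "adj_hi t \<noteq> b"
    using po_on_trans[OF partial_order anchors(2) zI(1) bV] po_on_antisym[OF partial_order zI(1) bV] zI
    by auto
  moreover have "le a (adj_hi t)" "adj_hi t \<noteq> a"
    using le_adjoined(2)[OF t anchors(1) a] po_on_refl[OF partial_order anchors(2)] anchors(1,3) a
    by auto
  moreover have "le y (adj_hi t) \<or> le (adj_hi t) y" if "y \<in> open_interval a b \<inter> stage (Suc t)" for y
    using that stage_Suc[OF t] le_adjoined(2)[OF t _ a] le_adjoined(2)[OF t anchors(1)]
      po_on_refl[OF partial_order anchors(2)] unfolding open_interval_def by auto
  ultimately show ?thesis
    using anchors stage_Suc[OF t] unfolding open_interval_def by auto
qed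

text \<open>By the time both \<open>a\<close> and \<open>b\<close> are present, the elements of \<open>(a, b)\<close> present are all
  comparable with one of them: they form a chain (of \<open>C0\<close> or of the last adjunct), or they are
  all comparable with the anchor of the last adjunct.\<close>

lemma interval_hub:
  assumes a: "a \<in> V" and b: "b \<in> V" and ab: "le a b" "a \<noteq> b"
    and v: "v \<in> open_interval a b \<inter> stage (max (birth a) (birth b))"
  shows "\<exists>h\<in>open_interval a b \<inter> stage (max (birth a) (birth b)).
    \<forall>y\<in>open_interval a b \<inter> stage (max (birth a) (birth b)). le y h \<or> le h y"
proof (cases "max (birth a) (birth b)")
  case 0
  then show ?thesis
    using v C0_comparable stage_0 by auto
next
  case (Suc t)
  let ?S = "open_interval a b \<inter> stage (Suc t)"
  have t: "t < length ps"
    using birth_stage[OF a] birth_stage[OF b] Suc by (metis max_def Suc_le_lessD)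
  have "a \<in> stage (Suc t)" "b \<in> stage (Suc t)"
    using in_stage_iff[OF a] in_stage_iff[OF b] Suc by auto
  then have ab_in: "a \<in> stage t \<union> adj_chain t" "b \<in> stage t \<union> adj_chain t"
    using stage_Suc[OF t] by auto
  have "\<not> (a \<in> stage t \<and> b \<in> stage t)"
    using in_stage_iff[OF a] in_stage_iff[OF b] Suc by auto
  have v': "v \<in> open_interval a b \<inter> stage (Suc t)"
    using v Suc by simp
  have "\<exists>h\<in>open_interval a b \<inter> stage (Suc t).
    \<forall>y\<in>open_interval a b \<inter> stage (Suc t). le y h \<or> le h y"
  proof (cases "open_interval a b \<inter> stage t = {}")
    case True
    then have chain: "open_interval a b \<inter> stage (Suc t) \<subseteq> adj_chain t"
      using stage_Suc[OF t] by auto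
    show ?thesis
    proof (rule bexI[of _ v], intro ballI)
      fix y
      assume "y \<in> open_interval a b \<inter> stage (Suc t)"
      then show "le y v \<or> le v y"
        using adj_chain_comparable[OF t] chain v' by blast
    qed (rule v')
  next
    case False
    then obtain z where z: "z \<in> open_interval a b \<inter> stage t"
      by blast
    have zI: "z \<in> V" "le a z" "le z b" "z \<in> stage t"
      using z unfolding open_interval_def by auto
    have "\<not> (a \<in> adj_chain t \<and> b \<in> adj_chain t)"
    proof
      assume "a \<in> adj_chain t \<and> b \<in> adj_chain t"
      then have "le (adj_hi t) z" "le z (adj_lo t)"
        using le_adjoined[OF t zI(4)] zI by blast+
      moreover have anchors: "adj_lo t \<in> V" "adj_hi t \<in> V" "le (adj_lo t) (adj_hi t)"
        "adj_lo t \<noteq> adj_hi t"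
        using adj_anchors[OF t] stage_subset by auto
      ultimately have "le (adj_hi t) (adj_lo t)"
        using po_on_trans[OF partial_order anchors(2) zI(1) anchors(1)] by blast
      then show False
        using po_on_antisym[OF partial_order anchors(1,2)] anchors(3,4) by blast
    qed
    then consider "a \<in> stage t" "b \<in> adj_chain t" | "a \<in> adj_chain t" "b \<in> stage t"
      using ab_in \<open>\<not> (a \<in> stage t \<and> b \<in> stage t)\<close> by blast
    then show ?thesis
    proof cases
      case 1
      then show ?thesis
        using lower_anchor_hub[OF t 1 z] by blast
    next
      case 2
      then show ?thesis
        using upper_anchor_hub[OF t 2 z] by blast
    qed
  qed
  then show ?thesis
    using Suc by simp
qed

lemma not_isolated_of_early_pair:
  assumes "a \<in> V" "b \<in> V" "le a b" "a \<noteq> b"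
    and v: "v \<in> open_interval a b \<inter> stage (max (birth a) (birth b))"
    and y: "y \<in> open_interval a b \<inter> stage (max (birth a) (birth b))" and "y \<noteq> v"
  shows "\<not> isolated a b v"
  using interval_hub[OF assms(1-4) v] not_isolated_of_hub[OF v y \<open>y \<noteq> v\<close>] by blast

lemma isolated_fresh:
  assumes x: "isolated a b x" and pos: "0 < birth x"
  shows "\<forall>z\<in>open_interval a b \<inter> stage (birth x - 1). \<not> le z x \<and> \<not> le x z"
proof -
  have "x \<in> V"
    using x unfolding isolated_def open_interval_def by auto
  then have "x \<notin> stage (birth x - 1)"
    using in_stage_iff pos by simp
  then show ?thesis
    using x unfolding isolated_def by auto
qed

text \<open>Two elements of \<open>(a, b)\<close> that arrive after \<open>a\<close> and \<open>b\<close>, each incomparable with the elements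
  of \<open>(a, b)\<close> present before it, are adjoined with the same pair \<open>(a, b)\<close>, hence by distinctness of
  the adjunct pairs in the same chain.\<close>

lemma late_fresh_comparable:
  assumes a: "a \<in> V" and b: "b \<in> V"
    and x: "x \<in> open_interval a b" "max (birth a) (birth b) < birth x"
      "\<forall>z\<in>open_interval a b \<inter> stage (birth x - 1). \<not> le z x \<and> \<not> le x z"
    and y: "y \<in> open_interval a b" "max (birth a) (birth b) < birth y"
      "\<forall>z\<in>open_interval a b \<inter> stage (birth y - 1). \<not> le z y \<and> \<not> le y z"
  shows "le x y \<or> le y x"
proof -
  obtain tx ty where tx: "birth x = Suc tx" and ty: "birth y = Suc ty"
    using x(2) y(2) by (metis less_nat_zero_code not0_implies_Suc)
  have xV: "x \<in> V" and yV: "y \<in> V"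
    using x(1) y(1) unfolding open_interval_def by auto
  have "adj_lo tx = a \<and> adj_hi tx = b" "adj_lo ty = a \<and> adj_hi ty = b"
    using adj_pair_of_fresh[OF a b x(1) tx] adj_pair_of_fresh[OF a b y(1) ty] x y tx ty by auto
  moreover have "tx < length ps" "x \<in> adj_chain tx" "ty < length ps" "y \<in> adj_chain ty"
    using birth_Suc[OF xV tx] birth_Suc[OF yV ty] by auto
  ultimately show ?thesis
    using adj_pair_inj adj_chain_comparable by metis
qed

lemma early_isolated_excludes_third:
  assumes a: "a \<in> V" and b: "b \<in> V" and ab: "le a b" "a \<noteq> b"
    and v1: "isolated a b v1" "birth v1 \<le> max (birth a) (birth b)"
    and v2: "isolated a b v2" "v1 \<noteq> v2"
    and w: "w \<in> open_interval a b" "w \<noteq> v1" "w \<noteq> v2"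
  shows False
proof -
  let ?T = "max (birth a) (birth b)"
  have v1V: "v1 \<in> V" "v1 \<in> open_interval a b"
    using v1 unfolding isolated_def open_interval_def by auto
  have late: "?T < birth y" if y: "y \<in> open_interval a b" "y \<noteq> v1" for y
  proof (rule ccontr)
    assume "\<not> ?T < birth y"
    then have "y \<in> stage ?T" "v1 \<in> stage ?T"
      using y in_stage_iff v1V v1(2) unfolding open_interval_def by auto
    then show False
      using not_isolated_of_early_pair[OF a b ab, of v1 y] v1 v1V y by blast
  qed
  define E where "E = open_interval a b - {v1, v2}"
  obtain x where x: "x \<in> E" and least: "\<And>y. y \<in> E \<Longrightarrow> birth x \<le> birth y"
    using ex_has_least_nat[of "\<lambda>x. x \<in> E" w birth] w unfolding E_def by blast
  have xI: "x \<in> open_interval a b" "x \<noteq> v1" "x \<noteq> v2"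
    using x unfolding E_def by auto
  have "\<not> le z x \<and> \<not> le x z" if z: "z \<in> open_interval a b \<inter> stage (birth x - 1)" for z
  proof -
    have "birth z < birth x"
      using z in_stage_iff late[OF xI(1,2)] unfolding open_interval_def by auto
    then have "z = v1 \<or> z = v2"
      using least[of z] z unfolding E_def by fastforce
    then show ?thesis
      using v1 v2 xI unfolding isolated_def by auto
  qed
  moreover have "v2 \<in> open_interval a b"
    using v2 unfolding isolated_def by blast
  ultimately have "le x v2 \<or> le v2 x"
    using late_fresh_comparable[OF a b xI(1) late[OF xI(1,2)] _ _ late[of v2]]
      isolated_fresh[OF v2(1)] late[of v2] v2(2) by auto
  then show False
    using v2 xI unfolding isolated_def by blast
qed

lemma two_isolated_fill_interval:
  assumes a: "a \<in> V" and b: "b \<in> V" and ab: "le a b" "a \<noteq> b"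
    and v1: "isolated a b v1" and v2: "isolated a b v2" and v12: "v1 \<noteq> v2"
  shows "open_interval a b = {v1, v2}"
proof -
  let ?T = "max (birth a) (birth b)"
  have "w \<in> {v1, v2}" if w: "w \<in> open_interval a b" for w
  proof (rule ccontr)
    assume "w \<notin> {v1, v2}"
    consider "birth v1 \<le> ?T" | "birth v2 \<le> ?T" | "?T < birth v1" "?T < birth v2"
      by linarith
    then show False
    proof cases
      case 1
      then show False
        using early_isolated_excludes_third[OF a b ab v1 _ v2 v12 w] \<open>w \<notin> {v1, v2}\<close> by auto
    next
      case 2
      then show False
        using early_isolated_excludes_third[OF a b ab v2 _ v1 v12[symmetric] w] \<open>w \<notin> {v1, v2}\<close>
        by auto
    next
      case 3
      have "le v1 v2 \<or> le v2 v1"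
        using late_fresh_comparable[OF a b _ 3(1) isolated_fresh[OF v1] _ 3(2) isolated_fresh[OF v2]]
          v1 v2 3 unfolding isolated_def by auto
      then show False
        using v1 v2 v12 unfolding isolated_def by blast
    qed
  qed
  then show ?thesis
    using v1 v2 unfolding isolated_def by auto
qed

end

locale fundamental_block = reducible_chain_block V le n u
  for V :: "'a set" and le n u +
  fixes C0 :: "'a set" and ps :: "('a \<times> 'a \<times> 'a set) list"
  assumes rep: "adjunct_rep V le C0 ps"
    and distinct_pairs: "distinct (map (\<lambda>(a, b, C). (a, b)) ps)"
begin

sublocale A: distinct_adjunct_rep V le C0 ps
  using rep distinct_pairs partial_order by unfold_locales

sublocale I: interval_order V le n lo hi u
  by (rule interval_order)

lemma Irr_span:
  assumes "v \<in> Irr"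
  shows "v \<in> V" "1 \<le> lo v" "lo v < hi v" "hi v \<le> n"
  using assms I.lo_hi_range lo_less_hi unfolding Irr_def by auto

lemma point_iff_lo_eq_hi: "x \<in> V \<Longrightarrow> x \<in> u ` {1..n} \<longleftrightarrow> lo x = hi x"
  using lo_point hi_point lo_less_hi Irr_def by fastforce

lemma isolated_Irr:
  assumes v: "v \<in> Irr"
  shows "A.isolated (u (lo v)) (u (hi v)) v"
proof -
  have r: "1 \<le> lo v" "lo v < hi v" "hi v \<le> n" "v \<in> V"
    using Irr_span[OF v] by auto
  then have lk: "lo v \<in> {1..n}" "hi v \<in> {1..n}"
    by auto
  have "v \<in> A.open_interval (u (lo v)) (u (hi v))"
    using I.point_lo_le I.le_point_hi r v lk unfolding A.open_interval_def Irr_def by auto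
  moreover have "\<not> le z v \<and> \<not> le v z"
    if z: "z \<in> A.open_interval (u (lo v)) (u (hi v))" "z \<noteq> v" for z
  proof -
    have zV: "z \<in> V" "le (u (lo v)) z" "le z (u (hi v))" "z \<noteq> u (lo v)" "z \<noteq> u (hi v)"
      using z unfolding A.open_interval_def by auto
    then have "lo v \<le> lo z" "hi z \<le> hi v"
      using I.le_iff point_in lk hi_point lo_point by auto
    moreover have "lo z \<le> hi z"
      using I.lo_hi_range[OF zV(1)] by simp
    ultimately have "hi z \<le> lo v \<Longrightarrow> z = u (lo v)" "hi v \<le> lo z \<Longrightarrow> z = u (hi v)"
      using I.point_of_lo_eq_hi[OF zV(1)] by (metis le_antisym order_trans)+
    then show ?thesis
      using I.le_iff[OF zV(1) r(4)] I.le_iff[OF r(4) zV(1)] zV(4,5) z(2) by auto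
  qed
  ultimately show ?thesis
    unfolding A.isolated_def by blast
qed

lemma same_span_eq_of_long:
  assumes v: "v \<in> Irr" and w: "w \<in> Irr" and span: "lo w = lo v" "hi w = hi v"
    and long: "Suc (lo v) < hi v"
  shows "v = w"
proof (rule ccontr)
  assume "v \<noteq> w"
  have r: "1 \<le> lo v" "lo v < hi v" "hi v \<le> n"
    using Irr_span[OF v] by auto
  then have lk: "lo v \<in> {1..n}" "hi v \<in> {1..n}" "Suc (lo v) \<in> {1..n}"
    using long by auto
  have "A.open_interval (u (lo v)) (u (hi v)) = {v, w}"
    using A.two_isolated_fill_interval[OF point_in[OF lk(1)] point_in[OF lk(2)] _ _
        isolated_Irr[OF v] _ \<open>v \<noteq> w\<close>] isolated_Irr[OF w] span point_le_iff[OF lk(1,2)]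
      point_inj[OF lk(1,2)] r by auto
  moreover have "u (Suc (lo v)) \<in> A.open_interval (u (lo v)) (u (hi v))"
    unfolding A.open_interval_def using point_in[OF lk(3)] point_le_iff[OF lk(1) lk(3)]
      point_le_iff[OF lk(3) lk(2)] long point_inj[OF lk(3) lk(1)] point_inj[OF lk(3) lk(2)] by auto
  moreover have "u (Suc (lo v)) \<in> u ` {1..n}"
    using lk(3) by blast
  ultimately show False
    using v w unfolding Irr_def by auto
qed

lemma same_span_at_most_two:
  assumes v1: "v1 \<in> Irr" and v2: "v2 \<in> Irr" and v3: "v3 \<in> Irr"
    and span: "lo v2 = lo v1" "hi v2 = hi v1" "lo v3 = lo v1" "hi v3 = hi v1"
    and "v1 \<noteq> v2"
  shows "v3 = v1 \<or> v3 = v2"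
proof -
  have r: "1 \<le> lo v1" "lo v1 < hi v1" "hi v1 \<le> n"
    using Irr_span[OF v1] by auto
  then have lk: "lo v1 \<in> {1..n}" "hi v1 \<in> {1..n}"
    by auto
  have "A.open_interval (u (lo v1)) (u (hi v1)) = {v1, v2}"
    using A.two_isolated_fill_interval[OF point_in[OF lk(1)] point_in[OF lk(2)] _ _
        isolated_Irr[OF v1] _ \<open>v1 \<noteq> v2\<close>] isolated_Irr[OF v2] span point_le_iff[OF lk]
      point_inj[OF lk] r by auto
  then show ?thesis
    using isolated_Irr[OF v3] span unfolding A.isolated_def by auto
qed

text \<open>The detour of an element \<open>v\<close> spanning a single step \<open>u i \<prec> u (i+1)\<close> is an element with the
  same span.\<close>

lemma same_span_partner:
  assumes v: "v \<in> Irr" and short: "hi v = Suc (lo v)"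
  shows "\<exists>w\<in>Irr. w \<noteq> v \<and> lo w = lo v \<and> hi w = hi v"
proof -
  obtain p q z where pq: "covers V le p v" "covers V le v q"
    and z: "z \<in> V" "z \<noteq> v" "z \<noteq> p" "z \<noteq> q" "le p z" "le z q"
    using detour[OF v] by blast
  have r: "1 \<le> lo v" "lo v < hi v" "hi v \<le> n" "v \<in> V"
    using Irr_span[OF v] by auto
  then have lk: "lo v \<in> {1..n}" "hi v \<in> {1..n}"
    by auto
  have "p = u (lo v)" "q = u (hi v)"
    using lower_cover_eq[OF v pq(1)] upper_cover_eq[OF v pq(2)] point_lo[OF r(4)] point_hi[OF r(4)] v
    unfolding Irr_def by auto
  then have "lo v \<le> lo z" "hi z \<le> hi v"
    using I.le_iff[OF point_in[OF lk(1)] z(1)] I.le_iff[OF z(1) point_in[OF lk(2)]] z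
      hi_point[OF lk(1)] lo_point[OF lk(2)] by auto
  moreover have "lo z \<noteq> hi z"
    using I.point_of_lo_eq_hi[OF z(1)] z \<open>p = u (lo v)\<close> \<open>q = u (hi v)\<close> calculation short
    by (metis le_SucE le_antisym)
  ultimately have "lo z = lo v" "hi z = hi v"
    using I.lo_hi_range[OF z(1)] short by auto
  moreover have "z \<in> Irr"
    using point_iff_lo_eq_hi[OF z(1)] calculation r z(1) unfolding Irr_def by auto
  ultimately show ?thesis
    using z by blast
qed

end

context fundamental_block
begin

definition spans :: "(nat \<times> nat) set" where
  "spans = (\<lambda>v. (lo v, hi v)) ` Irr"

definition short_spans :: "nat set" where
  "short_spans = {i. (i, Suc i) \<in> spans}"

definition c_elem :: "nat \<times> nat \<Rightarrow> 'a" where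
  "c_elem p = (SOME v. v \<in> Irr \<and> (lo v, hi v) = p)"

definition x_elem :: "nat \<Rightarrow> 'a" where
  "x_elem i = (SOME v. v \<in> Irr \<and> lo v = i \<and> hi v = Suc i \<and> v \<noteq> c_elem (i, Suc i))"

lemma c_elem: "p \<in> spans \<Longrightarrow> c_elem p \<in> Irr \<and> lo (c_elem p) = fst p \<and> hi (c_elem p) = snd p"
  unfolding spans_def c_elem_def by (smt (verit, best) fst_conv imageE snd_conv someI_ex)

lemma spans_range: "p \<in> spans \<Longrightarrow> 1 \<le> fst p \<and> fst p < snd p \<and> snd p \<le> n"
  using c_elem Irr_span by metis

lemma x_elem:
  assumes "i \<in> short_spans"
  shows "x_elem i \<in> Irr \<and> lo (x_elem i) = i \<and> hi (x_elem i) = Suc i \<and> x_elem i \<noteq> c_elem (i, Suc i)"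
proof -
  have c: "c_elem (i, Suc i) \<in> Irr" "lo (c_elem (i, Suc i)) = i" "hi (c_elem (i, Suc i)) = Suc i"
    using c_elem[of "(i, Suc i)"] assms unfolding short_spans_def by auto
  then have "\<exists>v. v \<in> Irr \<and> lo v = i \<and> hi v = Suc i \<and> v \<noteq> c_elem (i, Suc i)"
    using same_span_partner[OF c(1)] by auto
  then show ?thesis
    unfolding x_elem_def by (rule someI_ex)
qed

lemma Irr_cases:
  assumes v: "v \<in> Irr"
  shows "v = c_elem (lo v, hi v) \<or> (hi v = Suc (lo v) \<and> lo v \<in> short_spans \<and> v = x_elem (lo v))"
proof -
  have span: "(lo v, hi v) \<in> spans"
    using v unfolding spans_def by blast
  have c: "c_elem (lo v, hi v) \<in> Irr" "lo (c_elem (lo v, hi v)) = lo v" "hi (c_elem (lo v, hi v)) = hi v"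
    using c_elem[OF span] by auto
  show ?thesis
  proof (cases "hi v = Suc (lo v)")
    case False
    then have "Suc (lo v) < hi v"
      using Irr_span[OF v] by auto
    then show ?thesis
      using same_span_eq_of_long[OF v c(1) c(2,3)] by simp
  next
    case True
    then have short: "lo v \<in> short_spans"
      using span unfolding short_spans_def by simp
    then show ?thesis
      using same_span_at_most_two[OF c(1) _ v, of "x_elem (lo v)"] x_elem[OF short] c True by auto
  qed
qed

lemma finite_spans: "finite spans"
  using finite_subset[of spans "{1..n} \<times> {1..n}"] spans_range by fastforce

lemma short_spans_range: "i \<in> short_spans \<Longrightarrow> 1 \<le> i \<and> Suc i \<le> n"
  using spans_range unfolding short_spans_def by fastforce

lemma finite_short_spans: "finite short_spans"
  using finite_subset[of short_spans "{1..n}"] short_spans_range by fastforce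

lemma Irr_eq: "Irr = c_elem ` spans \<union> x_elem ` short_spans"
proof
  show "Irr \<subseteq> c_elem ` spans \<union> x_elem ` short_spans"
    using Irr_cases unfolding spans_def by blast
  show "c_elem ` spans \<union> x_elem ` short_spans \<subseteq> Irr"
    using c_elem x_elem by blast
qed

lemma c_elem_x_elem_disjoint: "c_elem ` spans \<inter> x_elem ` short_spans = {}"
proof -
  have "c_elem p \<noteq> x_elem i" if "p \<in> spans" "i \<in> short_spans" for p i
    using c_elem[OF that(1)] x_elem[OF that(2)] by (metis prod.collapse)
  then show ?thesis
    by blast
qed

lemma inj_on_c_elem: "inj_on c_elem spans"
  unfolding inj_on_def using c_elem by (metis prod.collapse)

lemma inj_on_x_elem: "inj_on x_elem short_spans"
  unfolding inj_on_def using x_elem by metis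

lemma card_Irr: "card Irr = card spans + card short_spans"
  unfolding Irr_eq using card_Un_disjoint[OF _ _ c_elem_x_elem_disjoint] finite_spans
    finite_short_spans card_image[OF inj_on_c_elem] card_image[OF inj_on_x_elem] by simp

lemma card_carrier: "card V = n + card Irr"
proof -
  have "inj_on u {1..n}"
    using point_inj unfolding inj_on_def by blast
  then have "card (u ` {1..n}) = n"
    by (simp add: card_image)
  moreover have "finite (u ` {1..n})" "finite Irr"
    using finite_carrier unfolding Irr_def by auto
  moreover have "V = u ` {1..n} \<union> Irr" "u ` {1..n} \<inter> Irr = {}"
    using points_subset unfolding Irr_def by auto
  ultimately show ?thesis
    using card_Un_disjoint[of "u ` {1..n}" Irr] by simp
qed

definition bare_steps :: "nat set" where
  "bare_steps = {i. 1 \<le> i \<and> Suc i \<le> n \<and> i \<notin> short_spans}"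

lemma card_bare_steps: "card bare_steps + card short_spans = n - 1"
proof -
  have "bare_steps = {1..<n} - short_spans" "short_spans \<subseteq> {1..<n}"
    unfolding bare_steps_def using short_spans_range by fastforce+
  then show ?thesis
    using card_Diff_subset[OF finite_short_spans] card_mono[of "{1..<n}" short_spans] by simp
qed

lemma short_spans_iff: "1 \<le> i \<Longrightarrow> Suc i \<le> n \<Longrightarrow> i \<in> short_spans \<longleftrightarrow> (\<exists>z\<in>V. lo z = i \<and> hi z = Suc i)"
  using x_elem Irr_span point_iff_lo_eq_hi unfolding short_spans_def spans_def Irr_def
  by (smt (verit, best) Diff_iff Suc_n_not_n image_eqI mem_Collect_eq)

lemma cover_edges_eq:
  "cover_edges V le = (\<lambda>v. (u (lo v), v)) ` Irr \<union> (\<lambda>v. (v, u (hi v))) ` Irr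
    \<union> (\<lambda>i. (u i, u (Suc i))) ` bare_steps"
proof
  show "cover_edges V le \<subseteq> (\<lambda>v. (u (lo v), v)) ` Irr \<union> (\<lambda>v. (v, u (hi v))) ` Irr
    \<union> (\<lambda>i. (u i, u (Suc i))) ` bare_steps"
  proof
    fix e
    assume "e \<in> cover_edges V le"
    then obtain x y where e: "e = (x, y)" and c: "covers V le x y"
      unfolding cover_edges_def by auto
    have xy: "x \<in> V" "y \<in> V"
      using c unfolding covers_def by auto
    from I.covers_cases[OF c] show "e \<in> (\<lambda>v. (u (lo v), v)) ` Irr \<union> (\<lambda>v. (v, u (hi v))) ` Irr
      \<union> (\<lambda>i. (u i, u (Suc i))) ` bare_steps"
      using point_iff_lo_eq_hi xy e short_spans_iff unfolding Irr_def bare_steps_def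
      by (elim disjE conjE exE) (force, force, auto)
  qed
  have "covers V le (u (lo v)) v" "covers V le v (u (hi v))" if "v \<in> Irr" for v
    using I.covers_point_lo I.covers_hi_point Irr_span that by auto
  moreover have "covers V le (u i) (u (Suc i))" if "i \<in> bare_steps" for i
    using I.covers_consecutive_points short_spans_iff that unfolding bare_steps_def by auto
  ultimately show "(\<lambda>v. (u (lo v), v)) ` Irr \<union> (\<lambda>v. (v, u (hi v))) ` Irr
    \<union> (\<lambda>i. (u i, u (Suc i))) ` bare_steps \<subseteq> cover_edges V le"
    unfolding cover_edges_def by auto
qed

text \<open>Each element of \<open>Irr\<close> contributes two cover edges and one vertex, and each of the \<open>n - 1\<close>
  steps \<open>u i, u (i + 1)\<close> is either a cover edge or spanned by an \<open>x_elem\<close>.\<close>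

lemma nullity_eq_card_spans: "nullity V le = int (card spans)"
proof -
  define E1 where "E1 = (\<lambda>v. (u (lo v), v)) ` Irr"
  define E2 where "E2 = (\<lambda>v. (v, u (hi v))) ` Irr"
  define E3 where "E3 = (\<lambda>i. (u i, u (Suc i))) ` bare_steps"
  have points: "u (lo v) \<in> u ` {1..n}" "u (hi v) \<in> u ` {1..n}" if "v \<in> Irr" for v
    using Irr_span[OF that] by auto
  have steps: "u i \<in> u ` {1..n}" "u (Suc i) \<in> u ` {1..n}" if "i \<in> bare_steps" for i
    using that unfolding bare_steps_def by auto
  have "E1 \<inter> E2 = {}" "(E1 \<union> E2) \<inter> E3 = {}"
    unfolding E1_def E2_def E3_def using points steps unfolding Irr_def by auto
  moreover have "card E1 = card Irr" "card E2 = card Irr"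
    unfolding E1_def E2_def by (auto intro: card_image simp: inj_on_def)
  moreover have "card E3 = card bare_steps"
    unfolding E3_def using point_inj unfolding bare_steps_def
    by (intro card_image) (auto simp: inj_on_def)
  moreover have "bare_steps \<subseteq> {..n}"
    unfolding bare_steps_def by auto
  then have "finite bare_steps"
    using finite_subset by blast
  then have "finite E1" "finite E2" "finite E3"
    unfolding E1_def E2_def E3_def Irr_def using finite_carrier by auto
  ultimately have "card (cover_edges V le) = 2 * card Irr + card bare_steps"
    unfolding cover_edges_eq E1_def[symmetric] E2_def[symmetric] E3_def[symmetric]
    by (simp add: card_Un_disjoint)
  moreover have "card (V // cover_conn V le) = 1"
    using card_cover_components_of_least[OF finite_carrier partial_order, of "u 1"] point_in[of 1]
      I.le_iff hi_point[of 1] n_ge_2 I.lo_hi_range by auto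
  ultimately show ?thesis
    unfolding nullity_def using card_carrier card_Irr card_bare_steps n_ge_2 by simp
qed

end

fun cf_lo :: "cf_elem \<Rightarrow> nat" where
  "cf_lo (U i) = i"
| "cf_lo (X i) = i"
| "cf_lo (Cc i j) = i"

fun cf_hi :: "cf_elem \<Rightarrow> nat" where
  "cf_hi (U i) = i"
| "cf_hi (X i) = Suc i"
| "cf_hi (Cc i j) = j"

lemma cf_le_iff: "cf_le x y \<longleftrightarrow> x = y \<or> cf_hi x \<le> cf_lo y"
  by (cases x; cases y) auto

lemma finite_cf_carrier: "finite (cf_carrier n)"
proof -
  have "cf_carrier n \<subseteq> U ` {..n} \<union> X ` {..n} \<union> (\<lambda>(i, j). Cc i j) ` ({..n} \<times> {..n})"
    unfolding cf_carrier_def by auto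
  then show ?thesis
    by (rule finite_subset) auto
qed

lemma cf_interval_order: "1 \<le> n \<Longrightarrow> interval_order (cf_carrier n) cf_le n cf_lo cf_hi U"
proof
  show "finite (cf_carrier n)"
    by (rule finite_cf_carrier)
qed (auto simp: cf_le_iff cf_carrier_def)

lemma cf_index_diag: "cf_index n i j = cf_index n i i + (j - i)"
  unfolding cf_index_def by simp

lemma cf_index_next_row:
  assumes i: "1 \<le> i" "i < n"
  shows "cf_index n (Suc i) (Suc i) = cf_index n i n"
proof -
  have "even (i * (i - 1))"
    by (cases "even i") auto
  then have c: "2 * (i choose 2) = (i - 1) * i"
    by (simp add: choose_two mult.commute)
  have "(i - 1) * i \<le> (i - 1) * n"
    using i by simp
  then have b1: "(i choose 2) \<le> (i - 1) * n"
    using c by linarith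
  have "(i - 1) * i + 2 * i = (i + 1) * i"
    using i by (cases i) simp_all
  moreover have "(i + 1) * i \<le> i * n"
    using i mult_le_mono1[of "i + 1" n i] by (simp add: mult.commute)
  ultimately have b2: "(i choose 2) + i \<le> i * n"
    using c by linarith
  have suc: "Suc i choose 2 = (i choose 2) + i"
    by (simp add: numeral_2_eq_2)
  have "i * n = (i - 1) * n + n"
    using i by (cases i) simp_all
  then show ?thesis
    unfolding cf_index_def suc using b1 b2 i by simp
qed
lemma cf_index_diag_mono:
  assumes "i \<le> i'" "1 \<le> i" "i' \<le> n"
  shows "cf_index n i i \<le> cf_index n i' i'"
  using assms(1)
proof (induction i' rule: dec_induct)
  case (step m)
  then show ?case
    using cf_index_next_row[of m n] cf_index_diag[of n m n] assms by simp
qed simp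

lemma cf_index_less:
  assumes "1 \<le> i" "i < j" "j \<le> n" and "1 \<le> i'" "i' < j'" "j' \<le> n"
    and "(i, j) < (i', j')"
  shows "cf_index n i j < cf_index n i' j'"
proof (cases "i = i'")
  case True
  then show ?thesis
    using assms cf_index_diag[of n i j] cf_index_diag[of n i' j'] by auto
next
  case False
  then have "i < i'"
    using assms(7) by (auto simp: less_prod_def)
  have "cf_index n i j \<le> cf_index n i n"
    using cf_index_diag[of n i j] cf_index_diag[of n i n] assms by simp
  also have "\<dots> = cf_index n (Suc i) (Suc i)"
    using cf_index_next_row[of i n] assms \<open>i < i'\<close> by simp
  also have "\<dots> \<le> cf_index n i' i'"
    using cf_index_diag_mono[of "Suc i" i' n] \<open>i < i'\<close> assms by simp
  also have "\<dots> < cf_index n i' j'"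
    using cf_index_diag[of n i' j'] assms by simp
  finally show ?thesis .
qed

context interval_order
begin

lemma le_iff_le_point_lo:
  assumes x: "x \<in> V" and y: "y \<in> V" and "x \<noteq> y"
  shows "le x y \<longleftrightarrow> le x (u (lo y))"
proof -
  have r: "1 \<le> lo y" "lo y \<le> n"
    using lo_hi_range[OF y] by auto
  show ?thesis
    using le_iff[OF x y] le_iff[OF x point_in[OF r]] lo_point[OF r] hi_point[OF r] \<open>x \<noteq> y\<close>
    by auto
qed

lemma le_iff_point_hi_le:
  assumes x: "x \<in> V" and y: "y \<in> V" and "x \<noteq> y"
  shows "le x y \<longleftrightarrow> le (u (hi x)) y"
proof -
  have r: "1 \<le> hi x" "hi x \<le> n"
    using lo_hi_range[OF x] by auto
  show ?thesis
    using le_iff[OF x y] le_iff[OF point_in[OF r] y] lo_point[OF r] hi_point[OF r] \<open>x \<noteq> y\<close>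
    by auto
qed

end

context fundamental_block
begin

lemma adjunct_singleton:
  assumes points: "u ` {1..n} \<subseteq> W" and WV: "W \<subseteq> V" and agree: "\<forall>x\<in>W. \<forall>y\<in>W. ord x y = le x y"
    and c: "c \<in> Irr" "c \<notin> W"
    and witness: "Suc (lo c) < hi c \<or> (\<exists>x\<in>W \<inter> Irr. lo x = lo c \<and> hi x = hi c)"
  shows "adjunct_ok (W, ord) (u (lo c)) (u (hi c)) ({c}, le)"
    and "\<forall>x\<in>W \<union> {c}. \<forall>y\<in>W \<union> {c}.
      snd (adjunct (W, ord) (u (lo c)) (u (hi c)) ({c}, le)) x y = le x y"
proof -
  have cV: "c \<in> V" and r: "1 \<le> lo c" "lo c < hi c" "hi c \<le> n"
    using Irr_span[OF c(1)] by auto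
  then have lk: "lo c \<in> {1..n}" "hi c \<in> {1..n}"
    by auto
  have inW: "u (lo c) \<in> W" "u (hi c) \<in> W"
    using points lk by auto
  then have anchors: "u (lo c) \<in> W" "u (hi c) \<in> W" "u (lo c) \<noteq> u (hi c)" "ord (u (lo c)) (u (hi c))"
    using point_inj[OF lk] r agree point_le_iff[OF lk] by auto
  have "\<exists>z\<in>W. z \<noteq> u (lo c) \<and> z \<noteq> u (hi c) \<and> le (u (lo c)) z \<and> le z (u (hi c))"
  proof (cases "Suc (lo c) < hi c")
    case True
    then have k: "Suc (lo c) \<in> {1..n}"
      using r by auto
    then show ?thesis
      using points point_inj[OF k lk(1)] point_inj[OF k lk(2)] point_le_iff[OF lk(1) k]
        point_le_iff[OF k lk(2)] True by (intro bexI[of _ "u (Suc (lo c))"]) auto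
  next
    case False
    then obtain x where x: "x \<in> W" "x \<in> Irr" "lo x = lo c" "hi x = hi c"
      using witness by blast
    then show ?thesis
      using I.point_lo_le[of x] I.le_point_hi[of x] lk unfolding Irr_def by (intro bexI[OF _ x(1)]) auto
  qed
  then have "\<not> covers W ord (u (lo c)) (u (hi c))"
    using covers_cong[OF agree] unfolding covers_def by auto
  moreover have "fin_lattice W ord"
    using fin_lattice_cong[OF agree] interval_order.fin_lattice[OF I.restrict[OF WV points]] by simp
  moreover have "fin_lattice {c} le"
    unfolding fin_lattice_def po_on_def is_lub_def is_glb_def
    using po_on_refl[OF partial_order cV] by auto
  ultimately show "adjunct_ok (W, ord) (u (lo c)) (u (hi c)) ({c}, le)"
    unfolding adjunct_ok_def using anchors c(2) by auto
  have "le x c \<longleftrightarrow> le x (u (lo c))" "le c x \<longleftrightarrow> le (u (hi c)) x" if "x \<in> W" for x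
    using I.le_iff_le_point_lo[OF _ cV] I.le_iff_point_hi_le[OF cV] WV that c(2) by auto
  then show "\<forall>x\<in>W \<union> {c}. \<forall>y\<in>W \<union> {c}.
      snd (adjunct (W, ord) (u (lo c)) (u (hi c)) ({c}, le)) x y = le x y"
    unfolding adjunct_def using agree anchors c(2) po_on_refl[OF partial_order cV] by auto
qed

lemma adj_fold_singletons:
  assumes "u ` {1..n} \<subseteq> W" "W \<subseteq> V" "\<forall>x\<in>W. \<forall>y\<in>W. ord x y = le x y"
    and "distinct cs" "set cs \<subseteq> Irr" "set cs \<inter> W = {}"
    and "\<forall>c\<in>set cs. Suc (lo c) < hi c \<or> (\<exists>x\<in>W \<inter> Irr. lo x = lo c \<and> hi x = hi c)"
  shows "adj_valid le (W, ord) (map (\<lambda>c. (u (lo c), u (hi c), {c})) cs)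
    \<and> fst (adj_fold le (W, ord) (map (\<lambda>c. (u (lo c), u (hi c), {c})) cs)) = W \<union> set cs
    \<and> (\<forall>x\<in>W \<union> set cs. \<forall>y\<in>W \<union> set cs.
        snd (adj_fold le (W, ord) (map (\<lambda>c. (u (lo c), u (hi c), {c})) cs)) x y = le x y)"
  using assms
proof (induction cs arbitrary: W ord)
  case (Cons c cs)
  define L where "L = adjunct (W, ord) (u (lo c)) (u (hi c)) ({c}, le)"
  have c: "c \<in> Irr" "c \<notin> W" "Suc (lo c) < hi c \<or> (\<exists>x\<in>W \<inter> Irr. lo x = lo c \<and> hi x = hi c)"
    using Cons.prems by auto
  have L: "L = (W \<union> {c}, snd L)"
    unfolding L_def adjunct_def by simp
  have step: "adjunct_ok (W, ord) (u (lo c)) (u (hi c)) ({c}, le)"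
    "\<forall>x\<in>W \<union> {c}. \<forall>y\<in>W \<union> {c}. snd L x y = le x y"
    using adjunct_singleton[OF Cons.prems(1-3) c] unfolding L_def by auto
  have "W \<union> {c} \<subseteq> V"
    using Cons.prems(2) c(1) Irr_span by auto
  then have "adj_valid le (W \<union> {c}, snd L) (map (\<lambda>c. (u (lo c), u (hi c), {c})) cs)
    \<and> fst (adj_fold le (W \<union> {c}, snd L) (map (\<lambda>c. (u (lo c), u (hi c), {c})) cs)) = (W \<union> {c}) \<union> set cs
    \<and> (\<forall>x\<in>(W \<union> {c}) \<union> set cs. \<forall>y\<in>(W \<union> {c}) \<union> set cs.
        snd (adj_fold le (W \<union> {c}, snd L) (map (\<lambda>c. (u (lo c), u (hi c), {c})) cs)) x y = le x y)"
    using Cons.prems step(2) by (intro Cons.IH) auto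
  then have "adj_valid le L (map (\<lambda>c. (u (lo c), u (hi c), {c})) cs)
    \<and> fst (adj_fold le L (map (\<lambda>c. (u (lo c), u (hi c), {c})) cs)) = (W \<union> {c}) \<union> set cs
    \<and> (\<forall>x\<in>(W \<union> {c}) \<union> set cs. \<forall>y\<in>(W \<union> {c}) \<union> set cs.
        snd (adj_fold le L (map (\<lambda>c. (u (lo c), u (hi c), {c})) cs)) x y = le x y)"
    unfolding L[symmetric] .
  moreover have "W \<union> set (c # cs) = (W \<union> {c}) \<union> set cs"
    by auto
  ultimately show ?case
    using step(1) unfolding L_def by simp
qed simp

end

context fundamental_block
begin

definition span_list :: "(nat \<times> nat) list" where
  "span_list = sorted_list_of_set spans"

definition chain0 :: "'a set" where
  "chain0 = u ` {1..n} \<union> {x_elem i | i. (i, Suc i) \<in> set span_list}"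

lemma set_span_list: "set span_list = spans"
  unfolding span_list_def using finite_spans by simp

lemma length_span_list: "length span_list = card spans"
  unfolding span_list_def using finite_spans by simp

lemma span_list_range:
  assumes "s < length span_list"
  shows "1 \<le> fst (span_list ! s) \<and> fst (span_list ! s) < snd (span_list ! s) \<and> snd (span_list ! s) \<le> n"
proof -
  have "span_list ! s \<in> spans"
    using nth_mem[OF assms] set_span_list by simp
  then show ?thesis
    by (rule spans_range)
qed

lemma cf_index_span_list_less:
  assumes "s < t" "t < length span_list"
  shows "cf_index n (fst (span_list ! s)) (snd (span_list ! s))
    < cf_index n (fst (span_list ! t)) (snd (span_list ! t))"
proof -
  obtain i j i' j' where ij: "span_list ! s = (i, j)" "span_list ! t = (i', j')"
    by (metis prod.exhaust)
  have "span_list ! s < span_list ! t"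
    using sorted_wrt_nth_less[of "(<)" span_list s t] assms unfolding span_list_def by simp
  moreover have "1 \<le> i" "i < j" "j \<le> n" "1 \<le> i'" "i' < j'" "j' \<le> n"
    using span_list_range[of s] span_list_range[of t] assms ij by auto
  ultimately show ?thesis
    using cf_index_less[of i j n i' j'] ij by simp
qed

lemma chain0_eq: "chain0 = u ` {1..n} \<union> x_elem ` short_spans"
  unfolding chain0_def short_spans_def set_span_list by auto

lemma chain0_subset: "chain0 \<subseteq> V"
  unfolding chain0_eq using points_subset x_elem Irr_span by blast

lemma chain0_span:
  "z \<in> chain0 \<Longrightarrow> hi z \<le> Suc (lo z) \<and> (lo z \<noteq> hi z \<longrightarrow> lo z \<in> short_spans \<and> z = x_elem (lo z))"
  unfolding chain0_eq using lo_point hi_point x_elem by auto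

lemma maximal_chain_chain0: "maximal_chain V le chain0"
  unfolding maximal_chain_def
proof
  show "is_chain V le chain0"
    unfolding is_chain_def
  proof (intro conjI ballI)
    fix x y
    assume xy: "x \<in> chain0" "y \<in> chain0"
    have xV: "x \<in> V" "y \<in> V"
      using chain0_subset xy by auto
    show "le x y \<or> le y x"
    proof (rule ccontr)
      assume "\<not> (le x y \<or> le y x)"
      then have "x \<noteq> y" "lo y < hi x" "lo x < hi y"
        using I.le_iff[OF xV] I.le_iff[OF xV(2,1)] by auto
      moreover have "hi x \<le> Suc (lo x)" "hi y \<le> Suc (lo y)" "lo x \<le> hi x" "lo y \<le> hi y"
        using chain0_span[OF xy(1)] chain0_span[OF xy(2)] I.lo_hi_range[OF xV(1)]
          I.lo_hi_range[OF xV(2)] by auto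
      ultimately have "lo x = lo y" "lo x \<noteq> hi x" "lo y \<noteq> hi y"
        by auto
      then show False
        using chain0_span[OF xy(1)] chain0_span[OF xy(2)] \<open>x \<noteq> y\<close> by metis
    qed
  qed (rule chain0_subset)
  show "\<forall>C. is_chain V le C \<and> chain0 \<subseteq> C \<longrightarrow> C = chain0"
  proof (intro allI impI)
    fix C
    assume C: "is_chain V le C \<and> chain0 \<subseteq> C"
    show "C = chain0"
    proof (rule ccontr)
      assume "C \<noteq> chain0"
      then obtain y where y: "y \<in> C" "y \<notin> chain0"
        using C by auto
      then have yI: "y \<in> Irr" and yV: "y \<in> V"
        using C unfolding is_chain_def chain0_eq Irr_def by auto
      have comparable: "le y z \<or> le z y" if "z \<in> chain0" for z
        using C y that unfolding is_chain_def by blast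
      have span: "1 \<le> lo y" "lo y < hi y" "hi y \<le> n"
        using Irr_span[OF yI] by auto
      obtain z where z: "z \<in> chain0" "lo z < hi y" "lo y < hi z"
      proof (cases "hi y = Suc (lo y)")
        case True
        have "(lo y, hi y) \<in> spans"
          using yI unfolding spans_def by blast
        then have "lo y \<in> short_spans"
          using True unfolding short_spans_def by simp
        then have "x_elem (lo y) \<in> chain0" "lo (x_elem (lo y)) = lo y" "hi (x_elem (lo y)) = Suc (lo y)"
          using x_elem unfolding chain0_eq by auto
        then show ?thesis
          using that[of "x_elem (lo y)"] True span by auto
      next
        case False
        then have k: "Suc (lo y) \<in> {1..n}"
          using span by auto
        then have "u (Suc (lo y)) \<in> chain0"
          unfolding chain0_eq by blast
        then show ?thesis
          using that[of "u (Suc (lo y))"] lo_point[OF k] hi_point[OF k] False span by auto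
      qed
      moreover have "z \<noteq> y" "z \<in> V"
        using z y chain0_subset by auto
      ultimately show False
        using comparable[OF z(1)] I.le_iff[OF yV \<open>z \<in> V\<close>] I.le_iff[OF \<open>z \<in> V\<close> yV] by auto
    qed
  qed
qed

lemma chain0_covers:
  assumes i: "1 \<le> i" "i < n"
  shows "if (i, Suc i) \<in> set span_list
    then x_elem i \<in> V \<and> covers chain0 le (u i) (x_elem i) \<and> covers chain0 le (x_elem i) (u (Suc i))
    else covers chain0 le (u i) (u (Suc i))"
proof -
  interpret C: interval_order chain0 le n lo hi u
    using I.restrict[OF chain0_subset] unfolding chain0_def by blast
  show ?thesis
  proof (cases "(i, Suc i) \<in> set span_list")
    case True
    then have "i \<in> short_spans"
      unfolding set_span_list short_spans_def by simp
    then have "x_elem i \<in> chain0" "x_elem i \<in> Irr" "lo (x_elem i) = i" "hi (x_elem i) = Suc i"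
      using x_elem unfolding chain0_eq by auto
    then show ?thesis
      using True C.covers_point_lo C.covers_hi_point Irr_span by fastforce
  next
    case False
    then have "\<not> (\<exists>z\<in>chain0. lo z = i \<and> hi z = Suc i)"
      using chain0_span unfolding set_span_list short_spans_def by fastforce
    then show ?thesis
      using False C.covers_consecutive_points i by auto
  qed
qed

lemma adjunct_rep_chain0:
  "adjunct_rep V le chain0
    (map (\<lambda>s. (u (fst (span_list ! s)), u (snd (span_list ! s)), {c_elem (span_list ! s)}))
      [0..<length span_list])"
proof -
  let ?cs = "map c_elem span_list"
  have "lo (c_elem p) = fst p" "hi (c_elem p) = snd p" if "p \<in> set span_list" for p
    using c_elem that set_span_list by auto
  then have eq: "map (\<lambda>s. (u (fst (span_list ! s)), u (snd (span_list ! s)), {c_elem (span_list ! s)}))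
      [0..<length span_list] = map (\<lambda>c. (u (lo c), u (hi c), {c})) ?cs"
    by (intro nth_equalityI) auto
  have "distinct span_list"
    unfolding span_list_def by simp
  then have distinct: "distinct ?cs"
    using inj_on_c_elem set_span_list by (simp add: distinct_map)
  have set_cs: "set ?cs = c_elem ` spans"
    by (simp add: set_span_list)
  have "c_elem ` spans \<subseteq> Irr"
    using c_elem by blast
  then have new: "set ?cs \<subseteq> Irr" "set ?cs \<inter> chain0 = {}"
    using c_elem_x_elem_disjoint unfolding set_cs chain0_eq Irr_def by auto
  have witness: "Suc (lo c) < hi c \<or> (\<exists>x\<in>chain0 \<inter> Irr. lo x = lo c \<and> hi x = hi c)"
    if c: "c \<in> set ?cs" for c
  proof -
    obtain p where p: "p \<in> spans" "c = c_elem p"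
      using c set_cs by auto
    show ?thesis
    proof (cases "hi c = Suc (lo c)")
      case True
      have "(lo c, hi c) = p"
        using c_elem[OF p(1)] p(2) by simp
      then have "lo c \<in> short_spans"
        using p(1) True unfolding short_spans_def by simp
      then have "x_elem (lo c) \<in> chain0 \<inter> Irr" "lo (x_elem (lo c)) = lo c" "hi (x_elem (lo c)) = hi c"
        using x_elem True unfolding chain0_eq by auto
      then show ?thesis
        by blast
    next
      case False
      have "c \<in> Irr"
        using c_elem[OF p(1)] p(2) by simp
      then show ?thesis
        using Irr_span False by fastforce
    qed
  qed
  have "u ` {1..n} \<subseteq> chain0"
    unfolding chain0_def by blast
  note fold = adj_fold_singletons[OF this chain0_subset _ distinct new, of le]
  have "chain0 \<union> set ?cs = V"
    using Irr_eq set_cs points_subset unfolding chain0_eq Irr_def by auto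
  moreover have "\<forall>(a, b, C)\<in>set (map (\<lambda>c. (u (lo c), u (hi c), {c})) ?cs). is_chain V le C \<and> C \<noteq> {}"
    using new po_on_refl[OF partial_order] unfolding is_chain_def Irr_def by auto
  ultimately show ?thesis
    unfolding adjunct_rep_def eq using maximal_chain_chain0 fold witness by simp
qed

definition cf_embed :: "'a \<Rightarrow> cf_elem" where
  "cf_embed x = (if x \<in> u ` {1..n} then U (lo x)
    else if x \<in> x_elem ` short_spans then X (lo x) else Cc (lo x) (hi x))"

lemma cf_embed_point: "i \<in> {1..n} \<Longrightarrow> cf_embed (u i) = U i"
  unfolding cf_embed_def using lo_point by simp

lemma cf_embed:
  assumes x: "x \<in> V"
  shows "cf_embed x \<in> cf_carrier n \<and> cf_lo (cf_embed x) = lo x \<and> cf_hi (cf_embed x) = hi x"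
proof -
  have r: "1 \<le> lo x" "lo x \<le> hi x" "hi x \<le> n"
    using I.lo_hi_range[OF x] by auto
  consider "x \<in> u ` {1..n}" | "x \<notin> u ` {1..n}" "x \<in> x_elem ` short_spans"
    | "x \<notin> u ` {1..n}" "x \<notin> x_elem ` short_spans"
    by blast
  then show ?thesis
  proof cases
    case 1
    then show ?thesis
      using r point_iff_lo_eq_hi[OF x] unfolding cf_embed_def cf_carrier_def by auto
  next
    case 2
    then obtain i where i: "i \<in> short_spans" "x = x_elem i"
      by blast
    then show ?thesis
      using 2 x_elem[OF i(1)] short_spans_range[OF i(1)] unfolding cf_embed_def cf_carrier_def by auto
  next
    case 3
    then have "lo x < hi x"
      using r point_iff_lo_eq_hi[OF x] by auto
    then show ?thesis
      using r 3 unfolding cf_embed_def cf_carrier_def by auto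
  qed
qed

lemma cf_embed_kind:
  "cf_embed v \<in> range U \<longleftrightarrow> v \<in> u ` {1..n}"
  "cf_embed v \<in> range X \<longleftrightarrow> v \<notin> u ` {1..n} \<and> v \<in> x_elem ` short_spans"
  unfolding cf_embed_def by auto

lemma inj_on_cf_embed: "inj_on cf_embed V"
proof (rule inj_onI)
  fix x y
  assume x: "x \<in> V" and y: "y \<in> V" and eq: "cf_embed x = cf_embed y"
  have "cf_lo (cf_embed x) = cf_lo (cf_embed y)" "cf_hi (cf_embed x) = cf_hi (cf_embed y)"
    using eq by simp_all
  then have span: "lo x = lo y" "hi x = hi y"
    using cf_embed[OF x] cf_embed[OF y] by simp_all
  have kind: "x \<in> u ` {1..n} \<longleftrightarrow> y \<in> u ` {1..n}"
    "x \<in> x_elem ` short_spans \<and> x \<notin> u ` {1..n} \<longleftrightarrow> y \<in> x_elem ` short_spans \<and> y \<notin> u ` {1..n}"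
    using cf_embed_kind[of x] cf_embed_kind[of y] unfolding eq by blast+
  consider "x \<in> u ` {1..n}" | "x \<notin> u ` {1..n}" "x \<in> x_elem ` short_spans"
    | "x \<notin> u ` {1..n}" "x \<notin> x_elem ` short_spans"
    by blast
  then show "x = y"
  proof cases
    case 1
    then have "x = u (lo x)" "y = u (lo y)"
      using kind point_lo[OF x] point_lo[OF y] by simp_all
    then show ?thesis
      using span by simp
  next
    case 2
    then obtain i j where "i \<in> short_spans" "j \<in> short_spans" "x = x_elem i" "y = x_elem j"
      using kind by blast
    then show ?thesis
      using span x_elem by auto
  next
    case 3
    then have "x \<in> Irr" "y \<in> Irr" "y \<notin> x_elem ` short_spans"
      using kind x y unfolding Irr_def by auto
    then have "x = c_elem (lo x, hi x)" "y = c_elem (lo y, hi y)"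
      using 3 Irr_cases by blast+
    then show ?thesis
      using span by simp
  qed
qed

lemma order_iso_cf_embed: "order_iso V le (cf_embed ` V) cf_le cf_embed"
  unfolding order_iso_def bij_betw_def
proof (intro conjI ballI)
  fix x y
  assume x: "x \<in> V" and y: "y \<in> V"
  have "x = y \<longleftrightarrow> cf_embed x = cf_embed y"
    using inj_on_cf_embed x y unfolding inj_on_def by blast
  then show "le x y \<longleftrightarrow> cf_le (cf_embed x) (cf_embed y)"
    using I.le_iff[OF x y] cf_le_iff cf_embed[OF x] cf_embed[OF y] by simp
qed (use inj_on_cf_embed in auto)

lemma sublattice_cf_embed: "sublattice (cf_carrier n) cf_le (cf_embed ` V)"
  unfolding sublattice_def
proof (intro conjI ballI allI impI)
  interpret CF: interval_order "cf_carrier n" cf_le n cf_lo cf_hi U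
    using cf_interval_order n_ge_2 by simp
  have points: "U ` {1..n} \<subseteq> cf_embed ` V"
    using cf_embed_point point_in by (metis image_mono image_subsetI imageI)
  fix a b z
  assume a: "a \<in> cf_embed ` V" and b: "b \<in> cf_embed ` V"
    and z: "is_lub (cf_carrier n) cf_le a b z \<or> is_glb (cf_carrier n) cf_le a b z"
  have "a \<in> cf_carrier n" "b \<in> cf_carrier n"
    using a b cf_embed by auto
  then have "z = a \<or> z = b \<or> z \<in> U ` {1..n}"
    using z CF.is_lub_cases CF.is_glb_cases by blast
  then show "z \<in> cf_embed ` V"
    using a b points by blast
next
  show "cf_embed ` V \<subseteq> cf_carrier n"
    using cf_embed by blast
  show "cf_embed ` V \<noteq> {}"
    using point_in[of 1] n_ge_2 by auto
qed
end

context fundamental_block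
begin

lemma single_element_adjunct_rep:
  assumes "nullity V le = int l"
  shows "\<exists>(ij :: (nat \<times> nat) list) (c :: nat \<Rightarrow> 'a) (x :: nat \<Rightarrow> 'a).
    let C0' = u ` {1..n} \<union> {x i | i. (i, Suc i) \<in> set ij} in
      length ij = l
    \<and> (\<forall>s<l. 1 \<le> fst (ij ! s) \<and> fst (ij ! s) < snd (ij ! s) \<and> snd (ij ! s) \<le> n)
    \<and> (\<forall>s t. s < t \<and> t < l \<longrightarrow>
          cf_index n (fst (ij ! s)) (snd (ij ! s)) < cf_index n (fst (ij ! t)) (snd (ij ! t)))
    \<and> (\<forall>i. 1 \<le> i \<and> i < n \<longrightarrow>
          (if (i, Suc i) \<in> set ij
           then x i \<in> V \<and> covers C0' le (u i) (x i) \<and> covers C0' le (x i) (u (Suc i))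
           else covers C0' le (u i) (u (Suc i))))
    \<and> adjunct_rep V le C0' (map (\<lambda>s. (u (fst (ij ! s)), u (snd (ij ! s)), {c s})) [0..<l])"
proof -
  have l: "l = length span_list"
    using assms nullity_eq_card_spans length_span_list by simp
  show ?thesis
    unfolding Let_def l
    apply (rule exI[of _ span_list], rule exI[of _ "\<lambda>s. c_elem (span_list ! s)"], rule exI[of _ x_elem])
    apply (fold chain0_def)
    apply (intro conjI)
    subgoal by (rule refl)
    subgoal using span_list_range by blast
    subgoal using cf_index_span_list_less by blast
    subgoal using chain0_covers by blast
    subgoal using adjunct_rep_chain0 by simp
    done
qed

end

theorem mainTheorem12:
  fixes V :: "'a set" and le :: "'a \<Rightarrow> 'a \<Rightarrow> bool"
    and n l :: nat and u :: "nat \<Rightarrow> 'a"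
  assumes "n \<ge> 2"
    and "fundamental_basic_block V le"
    and "\<forall>i\<in>{1..n}. \<forall>j\<in>{1..n}. i < j \<longrightarrow> le (u i) (u j) \<and> u i \<noteq> u j"
    and "{x. reducible V le x} = u ` {1..n}"
    and "nullity V le = int l"
  shows "(\<exists>(ij :: (nat \<times> nat) list) (c :: nat \<Rightarrow> 'a) (x :: nat \<Rightarrow> 'a).
            let C0' = u ` {1..n} \<union> {x i | i. (i, Suc i) \<in> set ij} in
            length ij = l
          \<and> (\<forall>s<l. 1 \<le> fst (ij ! s) \<and> fst (ij ! s) < snd (ij ! s) \<and> snd (ij ! s) \<le> n)
          \<and> (\<forall>s t. s < t \<and> t < l \<longrightarrow>
                cf_index n (fst (ij ! s)) (snd (ij ! s)) < cf_index n (fst (ij ! t)) (snd (ij ! t)))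
          \<and> (\<forall>i. 1 \<le> i \<and> i < n \<longrightarrow>
                (if (i, Suc i) \<in> set ij
                 then x i \<in> V \<and> covers C0' le (u i) (x i) \<and> covers C0' le (x i) (u (Suc i))
                 else covers C0' le (u i) (u (Suc i))))
          \<and> adjunct_rep V le C0'
              (map (\<lambda>s. (u (fst (ij ! s)), u (snd (ij ! s)), {c s})) [0..<l]))
       \<and> (\<exists>S f. sublattice (cf_carrier n) cf_le S
              \<and> {U i | i. 1 \<le> i \<and> i \<le> n} \<subseteq> S
              \<and> order_iso V le S cf_le f
              \<and> (\<forall>i\<in>{1..n}. f (u i) = U i))"
proof -
  obtain C0 ps where rep: "adjunct_rep V le C0 ps" "distinct (map (\<lambda>(a, b, C). (a, b)) ps)"
    and "rc_lattice V le" "basic_block V le"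
    using assms(2) unfolding fundamental_basic_block_def by blast
  then interpret F: fundamental_block V le n u C0 ps
    using assms unfolding rc_lattice_def by unfold_locales auto
  have "{U i | i. 1 \<le> i \<and> i \<le> n} \<subseteq> F.cf_embed ` V"
    using F.cf_embed_point F.point_in by force
  then have "\<exists>S f. sublattice (cf_carrier n) cf_le S \<and> {U i | i. 1 \<le> i \<and> i \<le> n} \<subseteq> S
      \<and> order_iso V le S cf_le f \<and> (\<forall>i\<in>{1..n}. f (u i) = U i)"
    using F.sublattice_cf_embed F.order_iso_cf_embed F.cf_embed_point by blast
  with F.single_element_adjunct_rep[OF assms(5)] show ?thesis
    by (rule conjI)
qed

end
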